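(* Let $r\ge 1$, $n\ge r+1$, and let $K$ be a pure $r$-dimensional simplicial complex on $n$ vertices that contains no subcomplex isomorphic to $\Delta_{r+2}^{r+1}$. Then $$\mathfrak{q}_{r-1}(K)\le rn-r^2+1,$$ with equality if and only if $|N^{\mathrm d}(F,u)|=r$ for every $F\in S_r(K)$ and every $u\in V(K)\setminus F$. Furthermore: (1) if $r=1$, equality holds if and only if $K$ is a complete bipartite graph (on all $n$ vertices); (2) if $r\ge 2$ is even, equality holds if and only if $K\cong {\sf T}_n^r$; (3) if $r\ge 3$ is odd, equality holds only if $K\cong{\sf T}_n^r$ or $K$ contains a subcomplex isomorphic to $\Diamond_{r+3}^{r+1}$.
   Context: A (finite abstract) simplicial complex $K$ on a finite vertex set $V(K)$ is a family of subsets of $V(K)$ closed under taking subsets and containing every singleton; it is on $n$ vertices if $|V(K)|=n$. An $i$-face is a member of cardinality $i+1$; $S_i(K)$ is the set of $i$-faces; facets are inclusion-maximal faces; $K$ is pure if all facets have the same dimension. A pure $1$-dimensional complex is identified with a graph without isolated vertices. For an $i$-face $F$, $d_K(F)$ is the number of $(i+1)$-faces containing $F$; two distinct $i$-faces are up-neighbors if their union is an $(i+1)$-face. The signless up Laplacian $Q_i^{\mathrm{up}}(K)$ is the operator on $\mathbb{R}^{S_i(K)}$ given by $(Q_i^{\mathrm{up}}(K)f)(F)=d_K(F)f(F)+\sum_{F'\text{ up-neighbor of }F}f(F')$, and $\mathfrak{q}_i(K)$ is its largest eigenvalue. For $F\in S_r(K)$ and $u\in V(K)\setminus F$, $N^{\mathrm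 d}(F,u)$ is the set of $r$-faces of $K$ of the form $G\cup\{u\}$ with $G\subset F$, $|G|=r$. $\Delta_{r+2}^{r+1}$ is the $r$-dimensional complex on $r+2$ vertices whose facets are all $(r+1)$-element subsets (the boundary of an $(r+1)$-simplex). The tented complex ${\sf T}_n^r$ is the pure $r$-dimensional complex on $[n]$ whose facets are the sets $\{n\}\cup F$ with $F$ an $r$-subset of $[n-1]$. The rhombic complex $\Diamond_{r+3}^{r+1}$ is the pure $r$-dimensional complex on $[r+3]$ whose facets are the sets $\{i\}\cup F$ with $i\in\{r+2,r+3\}$ and $F$ an $r$-subset of $[r+1]$. "Contains" / "isomorphic" refer to subcomplexes up to relabeling of vertices. *)

theory Defs
  imports Complex_Main
begin

definition simplicial_complex :: "'a set \<Rightarrow> 'a set set \<Rightarrow> bool" where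
  "simplicial_complex V K \<longleftrightarrow> finite V \<and> K \<noteq> {} \<and> (\<forall>F\<in>K. F \<subseteq> V) \<and>
     (\<forall>F\<in>K. \<forall>G. G \<subseteq> F \<longrightarrow> G \<in> K) \<and> (\<forall>v\<in>V. {v} \<in> K)"

definition faces :: "'a set set \<Rightarrow> nat \<Rightarrow> 'a set set" where
  "faces K i = {F \<in> K. card F = i + 1}"

definition facet :: "'a set set \<Rightarrow> 'a set \<Rightarrow> bool" where
  "facet K F \<longleftrightarrow> F \<in> K \<and> \<not> (\<exists>G\<in>K. F \<subset> G)"

definition pure_dim :: "'a set set \<Rightarrow> nat \<Rightarrow> bool" where
  "pure_dim K r \<longleftrightarrow> (\<forall>F. facet K F \<longrightarrow> card F = r + 1)"

definition up_degree :: "'a set set \<Rightarrow> nat \<Rightarrow> 'a set \<Rightarrow> nat" where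
  "up_degree K i F = card {G \<in> faces K (i + 1). F \<subseteq> G}"

definition up_neighbors :: "'a set set \<Rightarrow> nat \<Rightarrow> 'a set \<Rightarrow> 'a set \<Rightarrow> bool" where
  "up_neighbors K i F F' \<longleftrightarrow> F \<in> faces K i \<and> F' \<in> faces K i \<and> F \<noteq> F' \<and>
     F \<union> F' \<in> faces K (i + 1)"

definition signless_up_laplacian ::
  "'a set set \<Rightarrow> nat \<Rightarrow> ('a set \<Rightarrow> real) \<Rightarrow> 'a set \<Rightarrow> real" where
  "signless_up_laplacian K i f F =
     real (up_degree K i F) * f F + (\<Sum>F'\<in>{F'. up_neighbors K i F F'}. f F')"

definition is_eigenvalue_Qup :: "'a set set \<Rightarrow> nat \<Rightarrow> real \<Rightarrow> bool" where
  "is_eigenvalue_Qup K i mu \<longleftrightarrow> (\<exists>f. (\<forall>F. F \<notin> faces K i \<longrightarrow> f F = 0) \<and>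
     (\<exists>F\<in>faces K i. f F \<noteq> 0) \<and>
     (\<forall>F\<in>faces K i. signless_up_laplacian K i f F = mu * f F))"

definition q_up :: "'a set set \<Rightarrow> nat \<Rightarrow> real" where
  "q_up K i = Max {mu. is_eigenvalue_Qup K i mu}"

definition N_d :: "'a set set \<Rightarrow> nat \<Rightarrow> 'a set \<Rightarrow> 'a \<Rightarrow> 'a set set" where
  "N_d K r F u = {H \<in> faces K r. \<exists>G. G \<subseteq> F \<and> card G = r \<and> H = G \<union> {u}}"

definition gen_complex :: "'a set set \<Rightarrow> 'a set set" where
  "gen_complex Fs = {G. \<exists>F\<in>Fs. G \<subseteq> F}"

definition Delta_bd :: "nat \<Rightarrow> nat set set" where
  "Delta_bd r = gen_complex {F. F \<subseteq> {1..r+2} \<and> card F = r + 1}"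

definition tented :: "nat \<Rightarrow> nat \<Rightarrow> nat set set" where
  "tented n r = gen_complex {insert n F | F. F \<subseteq> {1..n-1} \<and> card F = r}"

definition rhombic :: "nat \<Rightarrow> nat set set" where
  "rhombic r = gen_complex {insert i F | i F. i \<in> {r+2, r+3} \<and> F \<subseteq> {1..r+1} \<and> card F = r}"

definition contains_copy :: "'a set set \<Rightarrow> nat set \<Rightarrow> nat set set \<Rightarrow> bool" where
  "contains_copy K VL L \<longleftrightarrow> (\<exists>\<phi>. inj_on \<phi> VL \<and> (\<forall>F\<in>L. \<phi> ` F \<in> K))"

definition isomorphic :: "'a set \<Rightarrow> 'a set set \<Rightarrow> nat set \<Rightarrow> nat set set \<Rightarrow> bool" where
  "isomorphic V K VL L \<longleftrightarrow> (\<exists>\<phi>. bij_betw \<phi> V VL \<and> (\<lambda>F. \<phi> ` F) ` K = L)"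

definition complete_bipartite :: "'a set \<Rightarrow> 'a set set \<Rightarrow> bool" where
  "complete_bipartite V K \<longleftrightarrow> (\<exists>A B. A \<inter> B = {} \<and> A \<union> B = V \<and> A \<noteq> {} \<and> B \<noteq> {} \<and>
     faces K 1 = {{a, b} | a b. a \<in> A \<and> b \<in> B})"

end

theory Submission
  imports Defs "Jordan_Normal_Form.Spectral_Radius" "HOL-Combinatorics.Transposition"
begin

text \<open>
  The signless up Laplacian on \<open>(r-1)\<close>-faces factors as \<open>Q = B B\<^sup>T\<close> through the incidence
  matrix \<open>B\<close> of \<open>(r-1)\<close>-faces versus \<open>r\<close>-faces, so every eigenvalue of \<open>Q\<close> is bounded by the
  largest row sum of the nonnegative matrix \<open>B\<^sup>T B\<close>.  The row sum at an \<open>r\<close>-face \<open>F\<close> is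
  \<open>(r + 1) + \<Sum>u\<notin>F. |N\<^sup>d(F, u)|\<close>, and without a copy of the boundary of an \<open>(r+1)\<close>-simplex
  every \<open>|N\<^sup>d(F, u)|\<close> is at most \<open>r\<close>; this is the bound.  In the equality case the maximum of
  \<open>|B\<^sup>T f|\<close> spreads to all \<open>r\<close>-faces, so every row sum is extremal, i.e. every outside vertex
  \<open>u\<close> has exactly one blocker in \<open>F\<close>; conversely then the degree function is an eigenvector.

  The extremal complexes are analysed through two vertices \<open>x, y\<close> outside an \<open>r\<close>-face \<open>E\<close>
  with distinct blockers \<open>a, b\<close>: the faces of \<open>E \<union> {x, y}\<close> then contain a rhombic complex,
  and the non-faces among \<open>(E \<union> {x, y}) - {w, t}\<close> pair off the \<open>r - 1\<close> vertices of
  \<open>E - {a, b}\<close>, so \<open>r\<close> is odd.  Without such a pair the blocker of an outside vertex does not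
  depend on the vertex, and exchanging vertices propagates a common apex to all \<open>r\<close>-faces: the
  complex is tented.  For \<open>r = 1\<close> the blocker condition describes complete bipartite graphs.
\<close>

section \<open>Eigenvalues of symmetric kernels\<close>

definition eigenvalues_on :: "'x set \<Rightarrow> ('x \<Rightarrow> 'x \<Rightarrow> real) \<Rightarrow> real set" where
  "eigenvalues_on S M = {\<mu>. \<exists>f. (\<forall>x. x \<notin> S \<longrightarrow> f x = 0) \<and> (\<exists>x\<in>S. f x \<noteq> 0) \<and>
     (\<forall>x\<in>S. (\<Sum>y\<in>S. M x y * f y) = \<mu> * f x)}"

lemma eigenvalues_on_cong:
  assumes "\<And>x y. x \<in> S \<Longrightarrow> y \<in> S \<Longrightarrow> M x y = M' x y"
  shows "eigenvalues_on S M = eigenvalues_on S M'"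
proof -
  have "(\<Sum>y\<in>S. M x y * f y) = (\<Sum>y\<in>S. M' x y * f y)" if "x \<in> S" for x f
    using assms that by (intro sum.cong) auto
  thus ?thesis unfolding eigenvalues_on_def by (simp cong: ball_cong_simp)
qed

lemma eigenvalues_on_reindex:
  assumes h: "bij_betw h T S"
  shows "eigenvalues_on S M \<subseteq> eigenvalues_on T (\<lambda>i j. M (h i) (h j))"
proof
  fix \<mu> assume "\<mu> \<in> eigenvalues_on S M"
  then obtain f where f0: "\<exists>x\<in>S. f x \<noteq> 0" and f: "\<forall>x\<in>S. (\<Sum>y\<in>S. M x y * f y) = \<mu> * f x"
    unfolding eigenvalues_on_def by blast
  define v where "v i = (if i \<in> T then f (h i) else 0)" for i
  have hS: "h i \<in> S" if "i \<in> T" for i using h that by (auto simp: bij_betw_def)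
  have "\<exists>i\<in>T. v i \<noteq> 0"
  proof -
    obtain x where "x \<in> S" "f x \<noteq> 0" using f0 by blast
    moreover obtain i where "i \<in> T" "h i = x" using h \<open>x \<in> S\<close> unfolding bij_betw_def by blast
    ultimately show ?thesis unfolding v_def by auto
  qed
  moreover have "\<forall>i\<in>T. (\<Sum>j\<in>T. M (h i) (h j) * v j) = \<mu> * v i"
  proof
    fix i assume i: "i \<in> T"
    have "(\<Sum>j\<in>T. M (h i) (h j) * v j) = (\<Sum>j\<in>T. M (h i) (h j) * f (h j))"
      unfolding v_def by (intro sum.cong) auto
    also have "\<dots> = (\<Sum>y\<in>S. M (h i) y * f y)" by (rule sum.reindex_bij_betw[OF h])
    also have "\<dots> = \<mu> * v i" using f hS[OF i] i by (simp add: v_def)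
    finally show "(\<Sum>j\<in>T. M (h i) (h j) * v j) = \<mu> * v i" .
  qed
  moreover have "\<forall>i. i \<notin> T \<longrightarrow> v i = 0" by (simp add: v_def)
  ultimately show "\<mu> \<in> eigenvalues_on T (\<lambda>i j. M (h i) (h j))"
    unfolding eigenvalues_on_def by blast
qed

lemma eigenvalues_on_subset_spectrum:
  "eigenvalues_on {0..<m} a \<subseteq> spectrum (mat m m (\<lambda>(i, j). a i j))" (is "_ \<subseteq> spectrum ?A")
proof
  fix \<mu> assume "\<mu> \<in> eigenvalues_on {0..<m} a"
  then obtain v where v0: "\<exists>i\<in>{0..<m}. v i \<noteq> 0"
    and v: "\<forall>i\<in>{0..<m}. (\<Sum>j\<in>{0..<m}. a i j * v j) = \<mu> * v i"
    unfolding eigenvalues_on_def by blast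
  have "?A *\<^sub>v vec m v = \<mu> \<cdot>\<^sub>v vec m v"
  proof (rule eq_vecI)
    fix i assume "i < dim_vec (\<mu> \<cdot>\<^sub>v vec m v)"
    hence i: "i < m" by simp
    have "(?A *\<^sub>v vec m v) $ i = (\<Sum>j\<in>{0..<m}. a i j * v j)"
      using i by (simp add: scalar_prod_def)
    thus "(?A *\<^sub>v vec m v) $ i = (\<mu> \<cdot>\<^sub>v vec m v) $ i" using v i by simp
  qed simp
  moreover have "vec m v \<noteq> 0\<^sub>v m"
  proof
    assume "vec m v = 0\<^sub>v m"
    hence "v i = 0" if "i < m" for i using that by (metis index_vec index_zero_vec(1))
    thus False using v0 by auto
  qed
  ultimately have "eigenvector ?A (vec m v) \<mu>" unfolding eigenvector_def by simp
  thus "\<mu> \<in> spectrum ?A" unfolding spectrum_def eigenvalue_def by blast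
qed

lemma finite_eigenvalues_on:
  assumes "finite S"
  shows "finite (eigenvalues_on S M)"
proof -
  obtain h where h: "bij_betw h {0..<card S} S" using ex_bij_betw_nat_finite[OF assms] by blast
  have "eigenvalues_on S M \<subseteq> spectrum (mat (card S) (card S) (\<lambda>(i, j). M (h i) (h j)))"
    using eigenvalues_on_reindex[OF h] eigenvalues_on_subset_spectrum by blast
  thus ?thesis by (rule finite_subset) (rule card_finite_spectrum(1)[OF mat_carrier])
qed

text \<open>The Rayleigh quotient \<open>\<Sum>i j. cnj (c i) * a i j * c j\<close> is its own conjugate.\<close>
lemma symmetric_eigenvalue_real:
  fixes a :: "nat \<Rightarrow> nat \<Rightarrow> real" and c :: "nat \<Rightarrow> complex"
  assumes sym: "\<And>i j. a i j = a j i" and c0: "\<exists>i<m. c i \<noteq> 0"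
    and eig: "\<And>i. i < m \<Longrightarrow> (\<Sum>j<m. of_real (a i j) * c j) = l * c i"
  shows "Im l = 0"
proof -
  define s where "s = (\<Sum>i<m. cnj (c i) * (\<Sum>j<m. of_real (a i j) * c j))"
  define N where "N = (\<Sum>i<m. (cmod (c i))\<^sup>2)"
  have "N > 0"
  proof -
    obtain i where "i < m" "c i \<noteq> 0" using c0 by blast
    hence "0 < (cmod (c i))\<^sup>2" "(cmod (c i))\<^sup>2 \<le> N" unfolding N_def
      by (auto intro!: member_le_sum)
    thus ?thesis by linarith
  qed
  have "s = (\<Sum>i<m. cnj (c i) * (l * c i))" unfolding s_def by (intro sum.cong) (simp_all add: eig)
  also have "\<dots> = l * (\<Sum>i<m. cnj (c i) * c i)" by (simp add: sum_distrib_left algebra_simps)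
  also have "(\<Sum>i<m. cnj (c i) * c i) = of_real N"
    unfolding N_def of_real_sum by (rule sum.cong[OF refl]) (simp only: complex_norm_square mult.commute)
  finally have s: "s = l * of_real N" .
  have "cnj s = (\<Sum>i<m. \<Sum>j<m. of_real (a i j) * (c i * cnj (c j)))"
    unfolding s_def by (simp add: sum_distrib_left algebra_simps)
  also have "\<dots> = (\<Sum>j<m. \<Sum>i<m. of_real (a i j) * (c i * cnj (c j)))"
    by (rule sum.swap)
  also have "\<dots> = (\<Sum>j<m. \<Sum>i<m. of_real (a j i) * (cnj (c j) * c i))"
    by (intro sum.cong refl) (metis sym mult.commute)
  also have "\<dots> = s" unfolding s_def by (simp add: sum_distrib_left algebra_simps)
  finally have "Im (cnj s) = Im s" by (rule arg_cong)
  hence "Im s = 0" by simp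
  hence "Im l * N = 0" using s by simp
  thus ?thesis using \<open>N > 0\<close> by simp
qed

text \<open>The real and imaginary parts of a complex eigenvector for a real eigenvalue of a real
  matrix are real eigenvectors, and one of them is nonzero.\<close>
lemma real_eigenvalue_of_complex_eigenvector:
  fixes a :: "nat \<Rightarrow> nat \<Rightarrow> real" and c :: "nat \<Rightarrow> complex"
  assumes c0: "\<exists>i<m. c i \<noteq> 0"
    and eig: "\<And>i. i < m \<Longrightarrow> (\<Sum>j<m. of_real (a i j) * c j) = of_real t * c i"
  shows "t \<in> eigenvalues_on {0..<m} a"
proof -
  have part: "t \<in> eigenvalues_on {0..<m} a"
    if p0: "\<exists>i<m. p (c i) \<noteq> 0" and p: "\<And>i. i < m \<Longrightarrow> (\<Sum>j<m. a i j * p (c j)) = t * p (c i)"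
    for p :: "complex \<Rightarrow> real"
  proof -
    define v where "v i = (if i < m then p (c i) else 0)" for i
    have "(\<Sum>j\<in>{0..<m}. a i j * v j) = t * v i" if "i \<in> {0..<m}" for i
      using p[of i] that by (simp add: v_def atLeast0LessThan)
    moreover obtain i where "i < m" "p (c i) \<noteq> 0" using p0 by blast
    hence "\<exists>i\<in>{0..<m}. v i \<noteq> 0" by (intro bexI[of _ i]) (auto simp: v_def)
    moreover have "\<forall>i. i \<notin> {0..<m} \<longrightarrow> v i = 0" by (simp add: v_def)
    ultimately show ?thesis unfolding eigenvalues_on_def by blast
  qed
  have re_im: "(\<Sum>j<m. a i j * Re (c j)) = t * Re (c i)" "(\<Sum>j<m. a i j * Im (c j)) = t * Im (c i)"
    if "i < m" for i
    using arg_cong[OF eig[OF that], of Re] arg_cong[OF eig[OF that], of Im] by simp_all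
  obtain i where "i < m" "c i \<noteq> 0" using c0 by blast
  hence "(\<exists>i<m. Re (c i) \<noteq> 0) \<or> (\<exists>i<m. Im (c i) \<noteq> 0)" by (auto simp: complex_eq_iff)
  thus ?thesis using part[of Re, OF _ re_im(1)] part[of Im, OF _ re_im(2)] by blast
qed

lemma symmetric_matrix_eigenvalues_on_nonempty:
  fixes a :: "nat \<Rightarrow> nat \<Rightarrow> real"
  assumes m: "0 < m" and sym: "\<And>i j. a i j = a j i"
  shows "eigenvalues_on {0..<m} a \<noteq> {}"
proof -
  define A where "A = mat m m (\<lambda>(i, j). complex_of_real (a i j))"
  have A: "A \<in> carrier_mat m m" unfolding A_def by simp
  obtain l where "l \<in> spectrum A" using spectrum_non_empty[OF A m] by auto
  then obtain w where ev: "eigenvector A w l" unfolding spectrum_def eigenvalue_def by auto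
  define c where "c i = w $ i" for i
  have wdim: "dim_vec w = m" using ev A unfolding eigenvector_def by auto
  have c0: "\<exists>i<m. c i \<noteq> 0"
  proof (rule ccontr)
    assume "\<not> ?thesis"
    hence "w = 0\<^sub>v m" using wdim unfolding c_def by (auto intro!: eq_vecI)
    thus False using ev A unfolding eigenvector_def by auto
  qed
  have eig: "(\<Sum>j<m. of_real (a i j) * c j) = l * c i" if i: "i < m" for i
  proof -
    have "(A *\<^sub>v w) $ i = (l \<cdot>\<^sub>v w) $ i" using ev unfolding eigenvector_def by simp
    moreover have "(A *\<^sub>v w) $ i = (\<Sum>j<m. of_real (a i j) * c j)"
      using A i wdim by (simp add: A_def c_def scalar_prod_def atLeast0LessThan)
    moreover have "(l \<cdot>\<^sub>v w) $ i = l * c i" using i wdim unfolding c_def by simp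
    ultimately show ?thesis by simp
  qed
  define t where "t = Re l"
  have "l = of_real t"
    unfolding t_def using symmetric_eigenvalue_real[OF sym c0 eig] by (simp add: complex_eq_iff)
  hence "t \<in> eigenvalues_on {0..<m} a"
    using real_eigenvalue_of_complex_eigenvector[OF c0] eig by simp
  thus ?thesis by blast
qed

lemma symmetric_eigenvalues_on_nonempty:
  assumes "finite S" "S \<noteq> {}" and sym: "\<And>x y. M x y = M y x"
  shows "eigenvalues_on S M \<noteq> {}"
proof -
  obtain h where h: "bij_betw h {0..<card S} S" using ex_bij_betw_nat_finite[OF assms(1)] by blast
  have "0 < card S" using assms by (simp add: card_gt_0_iff)
  hence "eigenvalues_on {0..<card S} (\<lambda>i j. M (h i) (h j)) \<noteq> {}"
    by (rule symmetric_matrix_eigenvalues_on_nonempty) (rule sym)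
  moreover have "eigenvalues_on {0..<card S} (\<lambda>i j. M (h i) (h j)) \<subseteq> eigenvalues_on S M"
  proof -
    have g: "bij_betw (inv_into {0..<card S} h) S {0..<card S}" by (rule bij_betw_inv_into[OF h])
    have "eigenvalues_on S (\<lambda>x y. M (h (inv_into {0..<card S} h x)) (h (inv_into {0..<card S} h y)))
        = eigenvalues_on S M"
      using h by (intro eigenvalues_on_cong) (simp add: bij_betw_inv_into_right)
    thus ?thesis using eigenvalues_on_reindex[OF g, of "\<lambda>i j. M (h i) (h j)"] by simp
  qed
  ultimately show ?thesis by blast
qed

definition Qup_kernel :: "'a set set \<Rightarrow> nat \<Rightarrow> 'a set \<Rightarrow> 'a set \<Rightarrow> real" where
  "Qup_kernel K i F F' =
     (if F = F' then real (up_degree K i F) else if up_neighbors K i F F' then 1 else 0)"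

lemma Qup_kernel_sym: "Qup_kernel K i F F' = Qup_kernel K i F' F"
  unfolding Qup_kernel_def up_neighbors_def by (auto simp: Un_commute)

lemma signless_up_laplacian_eq_kernel_sum:
  assumes fin: "finite (faces K i)" and F: "F \<in> faces K i"
  shows "signless_up_laplacian K i f F = (\<Sum>F'\<in>faces K i. Qup_kernel K i F F' * f F')"
proof -
  let ?S = "faces K i"
  have "(\<Sum>F'\<in>?S. Qup_kernel K i F F' * f F')
      = Qup_kernel K i F F * f F + (\<Sum>F'\<in>?S - {F}. Qup_kernel K i F F' * f F')"
    using sum.remove[OF fin F] by simp
  also have "(\<Sum>F'\<in>?S - {F}. Qup_kernel K i F F' * f F')
      = (\<Sum>F'\<in>?S - {F}. if up_neighbors K i F F' then f F' else 0)"
    by (rule sum.cong[OF refl]) (auto simp: Qup_kernel_def)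
  also have "\<dots> = (\<Sum>F'\<in>{F'\<in>?S - {F}. up_neighbors K i F F'}. f F')"
    by (simp add: sum.inter_filter[symmetric] fin)
  also have "{F'\<in>?S - {F}. up_neighbors K i F F'} = {F'. up_neighbors K i F F'}"
    unfolding up_neighbors_def by auto
  finally show ?thesis unfolding signless_up_laplacian_def Qup_kernel_def by simp
qed

lemma eigenvalues_Qup:
  assumes "finite (faces K i)"
  shows "{\<mu>. is_eigenvalue_Qup K i \<mu>} = eigenvalues_on (faces K i) (Qup_kernel K i)"
  unfolding is_eigenvalue_Qup_def eigenvalues_on_def
  using signless_up_laplacian_eq_kernel_sum[OF assms] by simp

lemma
  assumes "finite (faces K i)" and "faces K i \<noteq> {}"
  shows q_up_is_eigenvalue: "is_eigenvalue_Qup K i (q_up K i)"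
    and eigenvalue_le_q_up: "is_eigenvalue_Qup K i \<mu> \<Longrightarrow> \<mu> \<le> q_up K i"
proof -
  have "finite {\<mu>. is_eigenvalue_Qup K i \<mu>}" "{\<mu>. is_eigenvalue_Qup K i \<mu>} \<noteq> {}"
    unfolding eigenvalues_Qup[OF assms(1)]
    using finite_eigenvalues_on[OF assms(1)] symmetric_eigenvalues_on_nonempty[OF assms Qup_kernel_sym]
    by simp_all
  thus "is_eigenvalue_Qup K i (q_up K i)" "is_eigenvalue_Qup K i \<mu> \<Longrightarrow> \<mu> \<le> q_up K i"
    unfolding q_up_def using Max_in Max_ge by auto
qed

section \<open>Finite sets and cone complexes\<close>

lemma even_card_if_involution:
  assumes "finite A" and "\<forall>x\<in>A. m x \<in> A \<and> m x \<noteq> x \<and> m (m x) = x"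
  shows "even (card A)"
  using assms
proof (induction "card A" arbitrary: A rule: less_induct)
  case less
  show ?case
  proof (cases "A = {}")
    case False
    then obtain x where x: "x \<in> A" by blast
    define A' where "A' = A - {x, m x}"
    have mx: "m x \<in> A" "m x \<noteq> x" "m (m x) = x" using less.prems x by auto
    have card: "card A = card A' + 2"
      using less.prems(1) x mx card_Diff_subset[of "{x, m x}" A] card_mono[of A "{x, m x}"]
      unfolding A'_def by auto
    have "\<forall>y\<in>A'. m y \<in> A' \<and> m y \<noteq> y \<and> m (m y) = y"
      using less.prems(2) mx unfolding A'_def by (metis DiffE DiffI insertCI insertE singletonD)
    hence "even (card A')" using less.hyps[of A'] less.prems(1) card unfolding A'_def by simp
    thus ?thesis using card by simp
  qed simp
qed

lemma eq_Diff_singleton_if_card_Suc: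
  assumes "finite B" "S \<subseteq> B" "card S + 1 = card B"
  shows "\<exists>z\<in>B. S = B - {z}"
proof -
  have "card (B - S) = 1" using assms by (simp add: card_Diff_subset finite_subset)
  then obtain z where "B - S = {z}" using card_1_singletonE by blast
  thus ?thesis using assms(2) by blast
qed

lemma obtain_max_on_finite:
  fixes f :: "'b \<Rightarrow> 'c::linorder"
  assumes "finite S" "S \<noteq> {}"
  obtains x where "x \<in> S" "\<And>y. y \<in> S \<Longrightarrow> f y \<le> f x"
proof -
  have "Max (f ` S) \<in> f ` S" using assms by simp
  then obtain x where x: "x \<in> S" "f x = Max (f ` S)" by auto
  have "f y \<le> f x" if "y \<in> S" for y unfolding x(2) using assms(1) that by simp
  with x(1) show ?thesis by (rule that)
qed

text \<open>The common shape of the tented complex and of a complex all of whose facets contain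
  one fixed vertex \<open>b\<close>.\<close>
definition cone_complex :: "'b set \<Rightarrow> 'b \<Rightarrow> nat \<Rightarrow> 'b set set" where
  "cone_complex W b k = {X. \<exists>S. X \<subseteq> S \<and> S \<subseteq> W \<and> card S = k \<and> b \<in> S}"

lemma tented_eq_cone_complex:
  assumes "1 \<le> n"
  shows "tented n r = cone_complex {1..n} n (r + 1)"
proof -
  have "{insert n F | F. F \<subseteq> {1..n-1} \<and> card F = r} = {S. S \<subseteq> {1..n} \<and> card S = r + 1 \<and> n \<in> S}"
  proof (intro equalityI subsetI)
    fix S assume "S \<in> {insert n F | F. F \<subseteq> {1..n-1} \<and> card F = r}"
    then obtain F where F: "F \<subseteq> {1..n-1}" "card F = r" "S = insert n F" by blast
    have "n \<notin> F" "F \<subseteq> {1..n}" using F(1) assms by (auto simp: subset_iff)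
    moreover have "finite F" using F(1) by (rule finite_subset) simp
    ultimately show "S \<in> {S. S \<subseteq> {1..n} \<and> card S = r + 1 \<and> n \<in> S}"
      unfolding F(3) using F(2) assms by simp
  next
    fix S assume S: "S \<in> {S. S \<subseteq> {1..n} \<and> card S = r + 1 \<and> n \<in> S}"
    hence "S - {n} \<subseteq> {1..n-1}" "S = insert n (S - {n})" by (auto simp: subset_iff)
    moreover have "card (S - {n}) = r" using S finite_subset[of S "{1..n}"] by simp
    ultimately show "S \<in> {insert n F | F. F \<subseteq> {1..n-1} \<and> card F = r}" by blast
  qed
  thus ?thesis unfolding tented_def gen_complex_def cone_complex_def by auto
qed

lemma image_cone_complex:
  assumes \<phi>: "bij_betw \<phi> W W'" and b: "b \<in> W"
  shows "(\<lambda>X. \<phi> ` X) ` cone_complex W b k = cone_complex W' (\<phi> b) k"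
proof (intro equalityI subsetI)
  have inj: "inj_on \<phi> W" and img: "\<phi> ` W = W'" using \<phi> by (auto simp: bij_betw_def)
  {
    fix Y assume "Y \<in> (\<lambda>X. \<phi> ` X) ` cone_complex W b k"
    then obtain X S where "Y = \<phi> ` X" "X \<subseteq> S" "S \<subseteq> W" "card S = k" "b \<in> S"
      unfolding cone_complex_def by blast
    moreover have "card (\<phi> ` S) = card S" using inj_on_subset[OF inj \<open>S \<subseteq> W\<close>] by (rule card_image)
    ultimately show "Y \<in> cone_complex W' (\<phi> b) k"
      unfolding cone_complex_def using img by (intro CollectI exI[of _ "\<phi> ` S"]) auto
  next
    fix Y assume "Y \<in> cone_complex W' (\<phi> b) k"
    then obtain T where T: "Y \<subseteq> T" "T \<subseteq> W'" "card T = k" "\<phi> b \<in> T"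
      unfolding cone_complex_def by blast
    define S where "S = {v \<in> W. \<phi> v \<in> T}"
    define X where "X = {v \<in> W. \<phi> v \<in> Y}"
    have "\<phi> ` S = T" "\<phi> ` X = Y" using T img unfolding S_def X_def by auto
    moreover have "S \<subseteq> W" "X \<subseteq> S" "b \<in> S" using T b unfolding S_def X_def by auto
    moreover have "card S = k" using card_image[OF inj_on_subset[OF inj \<open>S \<subseteq> W\<close>]] \<open>\<phi> ` S = T\<close> T(3)
      by simp
    ultimately show "Y \<in> (\<lambda>X. \<phi> ` X) ` cone_complex W b k" unfolding cone_complex_def by blast
  }
qed

lemma card_eq_in_cone_complex:
  assumes "finite W"
  shows "{S \<in> cone_complex W b k. card S = k} = {S. S \<subseteq> W \<and> card S = k \<and> b \<in> S}"
proof (intro equalityI subsetI)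
  fix S assume "S \<in> {S \<in> cone_complex W b k. card S = k}"
  then obtain T where "S \<subseteq> T" "T \<subseteq> W" "card T = k" "b \<in> T" "card S = k"
    unfolding cone_complex_def by blast
  moreover from this have "S = T" using card_subset_eq[of T S] finite_subset[OF _ assms] by simp
  ultimately show "S \<in> {S. S \<subseteq> W \<and> card S = k \<and> b \<in> S}" by blast
qed (auto simp: cone_complex_def)

section \<open>Pure complexes and the factorisation \<open>Q = B B\<^sup>T\<close>\<close>

locale pure_complex =
  fixes V :: "'a set" and K :: "'a set set" and r :: nat
  assumes simplicial: "simplicial_complex V K" and pure: "pure_dim K r" and r_pos: "1 \<le> r"
begin

lemma finite_V: "finite V"
  using simplicial unfolding simplicial_complex_def by auto

lemma face_subset: "F \<in> K \<Longrightarrow> F \<subseteq> V"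
  using simplicial unfolding simplicial_complex_def by auto

lemma face_downward_closed: "F \<in> K \<Longrightarrow> G \<subseteq> F \<Longrightarrow> G \<in> K"
  using simplicial unfolding simplicial_complex_def by auto

lemma finite_K: "finite K"
proof (rule finite_subset)
  show "K \<subseteq> Pow V" using face_subset by blast
qed (simp add: finite_V)

lemma finite_face: "F \<in> K \<Longrightarrow> finite F"
  using face_subset finite_V finite_subset by blast

lemma finite_faces: "finite (faces K i)"
  using finite_K unfolding faces_def by simp

lemma top_faces_iff: "F \<in> faces K r \<longleftrightarrow> F \<in> K \<and> card F = r + 1"
  unfolding faces_def by simp

lemma ridges_iff: "G \<in> faces K (r - 1) \<longleftrightarrow> G \<in> K \<and> card G = r"
  unfolding faces_def using r_pos by auto

lemma top_face_subset: "F \<in> faces K r \<Longrightarrow> F \<subseteq> V"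
  using top_faces_iff face_subset by blast

lemma finite_top_face: "F \<in> faces K r \<Longrightarrow> finite F"
  using top_faces_iff finite_face by blast

lemma card_top_face: "F \<in> faces K r \<Longrightarrow> card F = r + 1"
  using top_faces_iff by blast

text \<open>Purity: a face of maximal cardinality above \<open>F\<close> is a facet.\<close>
lemma face_in_top_face:
  assumes "F \<in> K"
  shows "\<exists>G\<in>faces K r. F \<subseteq> G"
proof -
  let ?A = "{G\<in>K. F \<subseteq> G}"
  have "finite ?A" "?A \<noteq> {}" using finite_K assms by auto
  then obtain G where G: "G \<in> ?A" and max: "\<And>G'. G' \<in> ?A \<Longrightarrow> card G' \<le> card G"
    by (rule obtain_max_on_finite[where f = card]) blast
  have "facet K G"
    unfolding facet_def
  proof (intro conjI notI)
    show "G \<in> K" using G by simp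
    assume "\<exists>G'\<in>K. G \<subset> G'"
    then obtain G' where "G' \<in> K" "G \<subset> G'" by blast
    moreover from this have "card G < card G'" using finite_face by (intro psubset_card_mono) auto
    ultimately show False using max[of G'] G by auto
  qed
  hence "card G = r + 1" using pure unfolding pure_dim_def by blast
  thus ?thesis using G top_faces_iff by blast
qed

lemma top_faces_nonempty:
  assumes "V \<noteq> {}"
  shows "faces K r \<noteq> {}"
proof -
  obtain v where "v \<in> V" using assms by blast
  hence "{v} \<in> K" using simplicial unfolding simplicial_complex_def by blast
  thus ?thesis using face_in_top_face by blast
qed

lemma K_eq_down_closure: "K = {G. \<exists>F\<in>faces K r. G \<subseteq> F}"
proof
  show "K \<subseteq> {G. \<exists>F\<in>faces K r. G \<subseteq> F}" using face_in_top_face by blast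
  show "{G. \<exists>F\<in>faces K r. G \<subseteq> F} \<subseteq> K" using face_downward_closed top_faces_iff by blast
qed

definition boundary :: "'a set \<Rightarrow> 'a set set" where
  "boundary F = {G. G \<subseteq> F \<and> card G = r}"

definition cofaces :: "'a set \<Rightarrow> 'a set set" where
  "cofaces G = {F \<in> faces K r. G \<subseteq> F}"

lemma boundary_eq_image:
  assumes "F \<in> faces K r"
  shows "boundary F = (\<lambda>w. F - {w}) ` F"
proof -
  have fin: "finite F" and card: "card F = r + 1"
    using assms finite_top_face card_top_face by auto
  have "\<exists>w\<in>F. G = F - {w}" if "G \<subseteq> F" "card G = r" for G
  proof -
    have "card (F - G) = 1" using that fin card by (simp add: card_Diff_subset finite_subset)
    then obtain w where "F - G = {w}" using card_1_singletonE by blast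
    thus ?thesis using that by blast
  qed
  moreover have "card (F - {w}) = r" if "w \<in> F" for w using that fin card by simp
  ultimately show ?thesis unfolding boundary_def by blast
qed

lemma sum_boundary:
  assumes "F \<in> faces K r"
  shows "(\<Sum>G\<in>boundary F. h G) = (\<Sum>w\<in>F. h (F - {w}))"
proof -
  have "inj_on (\<lambda>w. F - {w}) F" by (rule inj_onI) blast
  thus ?thesis unfolding boundary_eq_image[OF assms] by (simp add: sum.reindex)
qed

lemma finite_boundary: "F \<in> faces K r \<Longrightarrow> finite (boundary F)"
  using boundary_eq_image finite_top_face by simp

lemma boundary_ridge: "F \<in> faces K r \<Longrightarrow> G \<in> boundary F \<Longrightarrow> G \<in> faces K (r - 1)"
  unfolding boundary_def ridges_iff top_faces_iff using face_downward_closed by blast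

lemma finite_cofaces: "finite (cofaces G)"
  unfolding cofaces_def using finite_faces by simp

lemma up_degree_eq_card_cofaces: "up_degree K (r - 1) G = card (cofaces G)"
  unfolding up_degree_def cofaces_def using r_pos by simp

lemma Un_boundary_faces:
  assumes F: "F \<in> faces K r" and G: "G \<in> boundary F" and G': "G' \<in> boundary F" and "G \<noteq> G'"
  shows "G \<union> G' = F"
proof -
  have fin: "finite F" and card: "card F = r + 1" using F finite_top_face card_top_face by auto
  have sub: "G \<subseteq> F" "G' \<subseteq> F" and cardG: "card G = r" "card G' = r"
    using G G' unfolding boundary_def by auto
  have "\<not> G' \<subseteq> G"
  proof
    assume "G' \<subseteq> G"
    moreover have "finite G" using finite_subset[OF sub(1) fin] .
    ultimately have "G' = G" using card_subset_eq cardG by metis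
    thus False using \<open>G \<noteq> G'\<close> by simp
  qed
  hence "card G < card (G \<union> G')" using sub fin by (intro psubset_card_mono) (auto intro: finite_subset)
  moreover have "card (G \<union> G') \<le> card F" using sub fin by (intro card_mono) auto
  ultimately have "card (G \<union> G') = card F" using cardG card by linarith
  thus ?thesis using sub fin card_subset_eq[of F "G \<union> G'"] by blast
qed

text \<open>With \<open>B\<close> the incidence matrix between \<open>(r-1)\<close>-faces and \<open>r\<close>-faces, \<open>boundary_sum f\<close>
  is \<open>B\<^sup>T f\<close>, and the next lemma says \<open>Q = B B\<^sup>T\<close>.\<close>
definition boundary_sum :: "('a set \<Rightarrow> real) \<Rightarrow> 'a set \<Rightarrow> real" where
  "boundary_sum f F = (\<Sum>G\<in>boundary F. f G)"

lemma signless_up_laplacian_eq_sum_cofaces: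
  assumes G: "G \<in> faces K (r - 1)"
  shows "signless_up_laplacian K (r - 1) f G = (\<Sum>F\<in>cofaces G. boundary_sum f F)"
proof -
  have cardG: "card G = r" using G ridges_iff by blast
  define A where "A F = boundary F - {G}" for F
  have in_boundary: "G \<in> boundary F" if "F \<in> cofaces G" for F
    using that cardG unfolding cofaces_def boundary_def by blast
  have "(\<Sum>F\<in>cofaces G. boundary_sum f F) = (\<Sum>F\<in>cofaces G. f G + (\<Sum>G'\<in>A F. f G'))"
    unfolding boundary_sum_def A_def using in_boundary finite_boundary
    by (intro sum.cong refl) (simp add: cofaces_def sum.remove)
  also have "\<dots> = real (card (cofaces G)) * f G + (\<Sum>F\<in>cofaces G. \<Sum>G'\<in>A F. f G')"
    by (simp add: sum.distrib)
  also have "(\<Sum>F\<in>cofaces G. \<Sum>G'\<in>A F. f G') = (\<Sum>(F, G')\<in>Sigma (cofaces G) A. f G')"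
    by (rule sum.Sigma) (use finite_cofaces finite_boundary in \<open>auto simp: cofaces_def A_def\<close>)
  also have "(\<Sum>(F, G')\<in>Sigma (cofaces G) A. f G') = (\<Sum>G'\<in>{G'. up_neighbors K (r - 1) G G'}. f G')"
  proof -
    have "bij_betw snd (Sigma (cofaces G) A) {G'. up_neighbors K (r - 1) G G'}"
    proof (rule bij_betw_byWitness[where f' = "\<lambda>G'. (G \<union> G', G')"])
      show "\<forall>p\<in>Sigma (cofaces G) A. (G \<union> snd p, snd p) = p"
        using Un_boundary_faces in_boundary unfolding A_def cofaces_def by auto
      show "\<forall>G'\<in>{G'. up_neighbors K (r - 1) G G'}. snd (G \<union> G', G') = G'" by simp
      have "up_neighbors K (r - 1) G G'" if F: "F \<in> cofaces G" and G': "G' \<in> A F" for F G'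
      proof -
        have FK: "F \<in> faces K r" using F unfolding cofaces_def by blast
        have "G \<union> G' = F" using Un_boundary_faces[OF FK in_boundary[OF F]] G' unfolding A_def by blast
        moreover have "G' \<in> faces K (r - 1)" using boundary_ridge[OF FK] G' unfolding A_def by blast
        ultimately show "up_neighbors K (r - 1) G G'"
          unfolding up_neighbors_def using G G' FK r_pos unfolding A_def by auto
      qed
      thus "snd ` Sigma (cofaces G) A \<subseteq> {G'. up_neighbors K (r - 1) G G'}" by auto
      show "(\<lambda>G'. (G \<union> G', G')) ` {G'. up_neighbors K (r - 1) G G'} \<subseteq> Sigma (cofaces G) A"
        unfolding up_neighbors_def A_def cofaces_def boundary_def ridges_iff using r_pos by auto
    qed
    thus ?thesis by (simp add: sum.reindex_bij_betw[symmetric] split_def)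
  qed
  finally show ?thesis
    unfolding signless_up_laplacian_def up_degree_eq_card_cofaces by simp
qed

definition exchange_vertices :: "'a set \<Rightarrow> 'a \<Rightarrow> 'a set" where
  "exchange_vertices F u = {w\<in>F. insert u (F - {w}) \<in> faces K r}"

lemma card_N_d:
  assumes F: "F \<in> faces K r" and u: "u \<notin> F"
  shows "card (N_d K r F u) = card (exchange_vertices F u)"
proof -
  have "N_d K r F u = (\<lambda>w. insert u (F - {w})) ` exchange_vertices F u"
  proof (intro equalityI subsetI)
    fix H assume "H \<in> N_d K r F u"
    then obtain G where H: "H \<in> faces K r" "G \<in> boundary F" "H = insert u G"
      unfolding N_d_def boundary_def by auto
    then obtain w where "w \<in> F" "G = F - {w}" using boundary_eq_image[OF F] by blast
    thus "H \<in> (\<lambda>w. insert u (F - {w})) ` exchange_vertices F u"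
      using H unfolding exchange_vertices_def by blast
  next
    fix H assume "H \<in> (\<lambda>w. insert u (F - {w})) ` exchange_vertices F u"
    then obtain w where w: "w \<in> F" "H = (F - {w}) \<union> {u}" "H \<in> faces K r"
      unfolding exchange_vertices_def by auto
    moreover have "card (F - {w}) = r" using w finite_top_face[OF F] card_top_face[OF F] by simp
    ultimately show "H \<in> N_d K r F u" unfolding N_d_def by blast
  qed
  moreover have "inj_on (\<lambda>w. insert u (F - {w})) (exchange_vertices F u)"
  proof (rule inj_onI)
    fix w w' assume "w \<in> exchange_vertices F u" "w' \<in> exchange_vertices F u"
      and eq: "insert u (F - {w}) = insert u (F - {w'})"
    hence "w \<in> F" "w' \<in> F" unfolding exchange_vertices_def by auto
    moreover have "F - {w} = F - {w'}" using arg_cong[OF eq, of "\<lambda>X. X - {u}"] u by auto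
    ultimately show "w = w'" by blast
  qed
  ultimately show ?thesis by (simp add: card_image)
qed

lemma card_exchange_vertices_eq_iff:
  assumes F: "F \<in> faces K r" and u: "u \<notin> F"
  shows "card (exchange_vertices F u) = r \<longleftrightarrow> (\<exists>!w. w \<in> F \<and> insert u (F - {w}) \<notin> faces K r)"
proof -
  define B where "B = {w\<in>F. insert u (F - {w}) \<notin> faces K r}"
  have "card (exchange_vertices F u) + card B = card F"
    unfolding exchange_vertices_def B_def using finite_top_face[OF F]
    by (subst card_Un_disjoint[symmetric]) (auto intro: arg_cong[where f = card])
  hence "card (exchange_vertices F u) = r \<longleftrightarrow> card B = 1" using card_top_face[OF F] by presburger
  also have "\<dots> \<longleftrightarrow> (\<exists>!w. w \<in> B)" unfolding One_nat_def card_1_singleton_iff by blast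
  finally show ?thesis unfolding B_def by simp
qed

text \<open>The row sum of \<open>B\<^sup>T B\<close> at the \<open>r\<close>-face \<open>F\<close>.\<close>
definition row_sum :: "'a set \<Rightarrow> nat" where
  "row_sum F = (\<Sum>G\<in>boundary F. card (cofaces G))"

lemma card_cofaces_boundary:
  assumes F: "F \<in> faces K r" and w: "w \<in> F"
  shows "card (cofaces (F - {w})) = 1 + card {u\<in>V - F. insert u (F - {w}) \<in> faces K r}"
proof -
  let ?U = "{u\<in>V - F. insert u (F - {w}) \<in> faces K r}"
  have "cofaces (F - {w}) = insert F ((\<lambda>u. insert u (F - {w})) ` ?U)"
  proof (intro equalityI subsetI)
    fix F' assume "F' \<in> cofaces (F - {w})"
    hence F': "F' \<in> faces K r" "F - {w} \<subseteq> F'" unfolding cofaces_def by auto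
    have "card (F' - (F - {w})) = 1"
      using F' F w finite_top_face card_top_face by (simp add: card_Diff_subset card_Diff_singleton)
    then obtain u where u: "F' - (F - {w}) = {u}" using card_1_singletonE by blast
    hence F'_eq: "F' = insert u (F - {w})" using F' by auto
    show "F' \<in> insert F ((\<lambda>u. insert u (F - {w})) ` ?U)"
    proof (cases "u = w")
      case True
      thus ?thesis using F'_eq w by auto
    next
      case False
      hence "u \<in> V - F" using u top_face_subset[OF F'(1)] by auto
      thus ?thesis using F'_eq F' by auto
    qed
  qed (use F in \<open>auto simp: cofaces_def\<close>)
  moreover have "inj_on (\<lambda>u. insert u (F - {w})) ?U" by (intro inj_onI) blast
  moreover have "F \<notin> (\<lambda>u. insert u (F - {w})) ` ?U" by blast
  ultimately show ?thesis using finite_V by (simp add: card_image)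
qed

lemma row_sum_eq:
  assumes F: "F \<in> faces K r"
  shows "row_sum F = (r + 1) + (\<Sum>u\<in>V - F. card (exchange_vertices F u))"
proof -
  have fin: "finite F" "finite (V - F)" using finite_top_face[OF F] finite_V by auto
  have count: "card {x\<in>A. P x} = (\<Sum>x\<in>A. if P x then 1 else 0)" if "finite A" for A and P :: "'a \<Rightarrow> bool"
    using that by (simp add: sum.If_cases Int_def conj_commute)
  have "row_sum F = (\<Sum>w\<in>F. 1 + card {u\<in>V - F. insert u (F - {w}) \<in> faces K r})"
    unfolding row_sum_def sum_boundary[OF F] using card_cofaces_boundary[OF F] by simp
  also have "\<dots> = (\<Sum>w\<in>F. 1 + (\<Sum>u\<in>V - F. if insert u (F - {w}) \<in> faces K r then 1 else 0))"
    by (rule sum.cong[OF refl], rule arg_cong[where f = "\<lambda>x. 1 + x"], rule count[OF fin(2)])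
  also have "\<dots> = card F + (\<Sum>w\<in>F. \<Sum>u\<in>V - F. if insert u (F - {w}) \<in> faces K r then 1 else 0)"
    by (simp only: sum.distrib card_eq_sum)
  also have "\<dots> = card F + (\<Sum>u\<in>V - F. \<Sum>w\<in>F. if insert u (F - {w}) \<in> faces K r then 1 else 0)"
    by (subst sum.swap) rule
  also have "\<dots> = (r + 1) + (\<Sum>u\<in>V - F. card (exchange_vertices F u))"
    unfolding exchange_vertices_def count[OF fin(1)] card_top_face[OF F] ..
  finally show ?thesis .
qed

definition row_sum_bound :: nat where
  "row_sum_bound = (r + 1) + r * (card V - (r + 1))"

lemma row_sum_eq_bound:
  assumes F: "F \<in> faces K r" and "\<forall>u\<in>V - F. card (exchange_vertices F u) = r"
  shows "row_sum F = row_sum_bound"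
  using assms row_sum_eq[OF F] top_face_subset[OF F] finite_V card_top_face[OF F]
  by (simp add: row_sum_bound_def card_Diff_subset finite_subset)

text \<open>Take \<open>F \<in> Ms\<close> closest to a missing \<open>F'\<close>: at least two vertices of \<open>F\<close> lie outside
  \<open>F'\<close>, and as only one exchange into \<open>F\<close> is blocked, one of them can be exchanged for a
  vertex of \<open>F' - F\<close>, producing a member of \<open>Ms\<close> closer to \<open>F'\<close>.\<close>
lemma exchange_closed_set_eq_top_faces:
  assumes Ms: "Ms \<subseteq> faces K r" "Ms \<noteq> {}"
    and closed: "\<And>F F'. F \<in> Ms \<Longrightarrow> F' \<in> faces K r \<Longrightarrow> card (F \<inter> F') = r \<Longrightarrow> F' \<in> Ms"
    and unique: "\<And>F u. F \<in> Ms \<Longrightarrow> u \<in> V - F \<Longrightarrow> card (exchange_vertices F u) = r"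
  shows "Ms = faces K r"
proof (rule ccontr)
  assume "Ms \<noteq> faces K r"
  then obtain F' where F': "F' \<in> faces K r" "F' \<notin> Ms" using Ms by blast
  have "finite Ms" using finite_subset[OF Ms(1) finite_faces] .
  then obtain F where FM: "F \<in> Ms" and max: "\<And>F2. F2 \<in> Ms \<Longrightarrow> card (F2 \<inter> F') \<le> card (F \<inter> F')"
    using Ms(2) by (rule obtain_max_on_finite[where f = "\<lambda>F. card (F \<inter> F')"]) blast
  have F: "F \<in> faces K r" using FM Ms by blast
  have fin: "finite F" "finite F'" and card: "card F = r + 1" "card F' = r + 1"
    using F F' finite_top_face card_top_face by auto
  have "card (F \<inter> F') \<noteq> r" using closed[OF FM F'(1)] F' by blast
  moreover have "card (F \<inter> F') \<noteq> r + 1"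
  proof
    assume "card (F \<inter> F') = r + 1"
    hence "F \<inter> F' = F" "F \<inter> F' = F'"
      using card_subset_eq[OF fin(1), of "F \<inter> F'"] card_subset_eq[OF fin(2), of "F \<inter> F'"] card by auto
    thus False using F' FM by auto
  qed
  moreover have "card (F \<inter> F') \<le> r + 1" using card_mono[OF fin(1), of "F \<inter> F'"] card by simp
  ultimately have less: "card (F \<inter> F') < r" by linarith
  have "card (F' - F) = r + 1 - card (F \<inter> F')"
    using card_Diff_subset_Int[of F' F] fin card by (simp add: Int_commute)
  moreover have "card (F - F') = r + 1 - card (F \<inter> F')"
    using card_Diff_subset_Int[of F F'] fin card by simp
  ultimately have "0 < card (F' - F)" and two: "2 \<le> card (F - F')" using less by auto
  hence "F' - F \<noteq> {}" by (simp add: card_gt_0_iff)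
  then obtain u where u: "u \<in> F'" "u \<notin> F" by blast
  obtain w1 w2 where w: "w1 \<in> F - F'" "w2 \<in> F - F'" "w1 \<noteq> w2"
  proof -
    obtain w1 where w1: "w1 \<in> F - F'" using two by (metis card.empty ex_in_conv not_numeral_le_zero)
    hence "card (F - F' - {w1}) \<ge> 1" using two fin by (simp add: card_Diff_singleton)
    then obtain w2 where "w2 \<in> F - F' - {w1}" by (metis card.empty ex_in_conv not_one_le_zero)
    thus ?thesis using that w1 by blast
  qed
  have uV: "u \<in> V - F" using u top_face_subset[OF F'(1)] by auto
  have "\<exists>!w. w \<in> F \<and> insert u (F - {w}) \<notin> faces K r"
    using unique[OF FM uV] card_exchange_vertices_eq_iff[OF F u(2)] by simp
  then obtain w where w_out: "w \<in> F - F'" and F2: "insert u (F - {w}) \<in> faces K r"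
    using w by blast
  have "card (F \<inter> insert u (F - {w})) = r"
    using w_out u fin card by (simp add: Int_absorb1 insert_absorb Int_insert_right card_Diff_singleton)
  hence "insert u (F - {w}) \<in> Ms" using closed[OF FM F2] by simp
  moreover have "insert u (F - {w}) \<inter> F' = insert u (F \<inter> F')" using u w_out by auto
  ultimately show False using max[of "insert u (F - {w})"] u fin by simp
qed

lemma ridges_nonempty:
  assumes "V \<noteq> {}"
  shows "faces K (r - 1) \<noteq> {}"
proof -
  obtain F where F: "F \<in> faces K r" using top_faces_nonempty[OF assms] by blast
  then obtain w where "w \<in> F" using card_top_face[OF F] by fastforce
  hence "F - {w} \<in> faces K (r - 1)" using boundary_ridge[OF F] boundary_eq_image[OF F] by blast
  thus ?thesis by blast
qed

text \<open>If all row sums of \<open>B\<^sup>T B\<close> equal \<open>c\<close>, then \<open>B\<^sup>T\<close> maps the degree function to the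
  constant \<open>c\<close>, so the degree function is an eigenfunction of \<open>Q = B B\<^sup>T\<close> for \<open>c\<close>.\<close>
lemma constant_row_sum_eigenvalue:
  assumes "V \<noteq> {}" and const: "\<And>F. F \<in> faces K r \<Longrightarrow> row_sum F = c"
  shows "is_eigenvalue_Qup K (r - 1) (real c)"
proof -
  define f where "f G = (if G \<in> faces K (r - 1) then real (card (cofaces G)) else 0)" for G
  have f_const: "boundary_sum f F = real c" if F: "F \<in> faces K r" for F
    using boundary_ridge[OF F] const[OF F]
    unfolding boundary_sum_def row_sum_def f_def by (simp del: of_nat_sum add: of_nat_sum[symmetric])
  obtain G where G: "G \<in> faces K (r - 1)" using ridges_nonempty[OF assms(1)] by blast
  then obtain F where "F \<in> faces K r" "G \<subseteq> F"
    using face_in_top_face ridges_iff by blast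
  hence "cofaces G \<noteq> {}" unfolding cofaces_def by blast
  hence "f G \<noteq> 0" using G finite_cofaces unfolding f_def by simp
  moreover have "signless_up_laplacian K (r - 1) f G' = real c * f G'"
    if G': "G' \<in> faces K (r - 1)" for G'
    using G' f_const unfolding signless_up_laplacian_eq_sum_cofaces[OF G'] f_def cofaces_def
    by simp
  ultimately show ?thesis
    unfolding is_eigenvalue_Qup_def using G by (intro exI[of _ f]) (auto simp: f_def)
qed

context
  fixes f :: "'a set \<Rightarrow> real" and \<mu> :: real
  assumes eigen: "\<And>G. G \<in> faces K (r - 1) \<Longrightarrow> signless_up_laplacian K (r - 1) f G = \<mu> * f G"
begin

lemma eigen_boundary_sum:
  assumes F: "F \<in> faces K r"
  shows "\<mu> * boundary_sum f F = (\<Sum>G\<in>boundary F. \<Sum>F'\<in>cofaces G. boundary_sum f F')"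
  unfolding boundary_sum_def[of f F] sum_distrib_left
  using boundary_ridge[OF F] eigen signless_up_laplacian_eq_sum_cofaces by (intro sum.cong) auto

lemma obtain_max_abs_boundary_sum:
  assumes "\<mu> \<noteq> 0" and G: "G \<in> faces K (r - 1)" "f G \<noteq> 0"
  obtains F0 where "F0 \<in> faces K r" "boundary_sum f F0 \<noteq> 0"
    and "\<And>F. F \<in> faces K r \<Longrightarrow> \<bar>boundary_sum f F\<bar> \<le> \<bar>boundary_sum f F0\<bar>"
proof -
  have sum: "(\<Sum>F\<in>cofaces G. boundary_sum f F) \<noteq> 0"
    using eigen[OF G(1)] signless_up_laplacian_eq_sum_cofaces[OF G(1)] assms(1) G(2) by simp
  obtain F where F: "F \<in> faces K r" "boundary_sum f F \<noteq> 0"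
  proof (rule ccontr)
    assume "\<not> thesis"
    hence "\<forall>F\<in>cofaces G. boundary_sum f F = 0" using that unfolding cofaces_def by blast
    thus False using sum by simp
  qed
  hence "faces K r \<noteq> {}" by blast
  with finite_faces obtain F0 where F0: "F0 \<in> faces K r"
    and max: "\<And>F. F \<in> faces K r \<Longrightarrow> \<bar>boundary_sum f F\<bar> \<le> \<bar>boundary_sum f F0\<bar>"
    by (rule obtain_max_on_finite[where f = "\<lambda>F. \<bar>boundary_sum f F\<bar>"]) blast
  have "boundary_sum f F0 \<noteq> 0" using max[OF F(1)] F(2) by auto
  with F0 show ?thesis using max by (rule that)
qed

lemma abs_eigen_boundary_sum_le:
  assumes F: "F \<in> faces K r" and bound: "\<And>F'. F' \<in> faces K r \<Longrightarrow> \<bar>boundary_sum f F'\<bar> \<le> M"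
  shows "\<bar>\<mu>\<bar> * \<bar>boundary_sum f F\<bar> \<le> (\<Sum>G\<in>boundary F. \<Sum>F'\<in>cofaces G. \<bar>boundary_sum f F'\<bar>)"
    and "(\<Sum>G\<in>boundary F. \<Sum>F'\<in>cofaces G. \<bar>boundary_sum f F'\<bar>) \<le> M * real (row_sum F)"
proof -
  have "\<bar>\<mu>\<bar> * \<bar>boundary_sum f F\<bar> = \<bar>\<Sum>G\<in>boundary F. \<Sum>F'\<in>cofaces G. boundary_sum f F'\<bar>"
    using eigen_boundary_sum[OF F] by (simp add: abs_mult[symmetric])
  also have "\<dots> \<le> (\<Sum>G\<in>boundary F. \<Sum>F'\<in>cofaces G. \<bar>boundary_sum f F'\<bar>)"
    by (intro order.trans[OF sum_abs] sum_mono sum_abs)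
  finally show "\<bar>\<mu>\<bar> * \<bar>boundary_sum f F\<bar> \<le> (\<Sum>G\<in>boundary F. \<Sum>F'\<in>cofaces G. \<bar>boundary_sum f F'\<bar>)" .
  have "(\<Sum>G\<in>boundary F. \<Sum>F'\<in>cofaces G. \<bar>boundary_sum f F'\<bar>) \<le> (\<Sum>G\<in>boundary F. \<Sum>F'\<in>cofaces G. M)"
    using bound unfolding cofaces_def by (intro sum_mono) auto
  also have "\<dots> = M * real (row_sum F)"
    unfolding row_sum_def by (simp add: of_nat_sum sum_distrib_left mult.commute)
  finally show "(\<Sum>G\<in>boundary F. \<Sum>F'\<in>cofaces G. \<bar>boundary_sum f F'\<bar>) \<le> M * real (row_sum F)" .
qed

lemma boundary_sum_attains_bound:
  assumes F: "F \<in> faces K r" and bound: "\<And>F'. F' \<in> faces K r \<Longrightarrow> \<bar>boundary_sum f F'\<bar> \<le> M"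
    and eq: "M * real (row_sum F) \<le> \<bar>\<mu>\<bar> * \<bar>boundary_sum f F\<bar>"
    and G: "G \<in> boundary F" and F': "F' \<in> cofaces G"
  shows "\<bar>boundary_sum f F'\<bar> = M"
proof -
  have bound': "\<bar>boundary_sum f F''\<bar> \<le> M" if "F'' \<in> cofaces G''" for F'' G''
    using bound that unfolding cofaces_def by blast
  have "(\<Sum>G\<in>boundary F. \<Sum>F'\<in>cofaces G. \<bar>boundary_sum f F'\<bar>) = M * real (row_sum F)"
    using abs_eigen_boundary_sum_le[OF F bound] eq by linarith
  hence "(\<Sum>G\<in>boundary F. \<Sum>F'\<in>cofaces G. M - \<bar>boundary_sum f F'\<bar>) = 0"
    unfolding row_sum_def by (simp add: sum_subtractf of_nat_sum sum_distrib_left mult.commute)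
  hence "(\<Sum>F'\<in>cofaces G. M - \<bar>boundary_sum f F'\<bar>) = 0"
    using G finite_boundary[OF F] bound' by (subst (asm) sum_nonneg_eq_0_iff) (auto intro!: sum_nonneg)
  thus ?thesis using F' finite_cofaces bound' by (subst (asm) sum_nonneg_eq_0_iff) auto
qed

end


subsection \<open>Blockers and the extremal complexes\<close>

text \<open>A \<^emph>\<open>blocker\<close> of an outside vertex \<open>u\<close> in the \<open>r\<close>-face \<open>F\<close> is a \<open>w \<in> F\<close> such that
  exchanging \<open>w\<close> for \<open>u\<close> does not give a face.\<close>
definition unique_blockers :: bool where
  "unique_blockers \<longleftrightarrow>
     (\<forall>F\<in>faces K r. \<forall>u\<in>V - F. \<exists>!w. w \<in> F \<and> insert u (F - {w}) \<notin> faces K r)"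

lemma unique_blockers_iff:
  "unique_blockers \<longleftrightarrow> (\<forall>F\<in>faces K r. \<forall>u\<in>V - F. card (exchange_vertices F u) = r)"
  unfolding unique_blockers_def using card_exchange_vertices_eq_iff by auto

lemma obtain_blocker:
  assumes "unique_blockers" "F \<in> faces K r" "u \<in> V - F"
  obtains w where "w \<in> F" "insert u (F - {w}) \<notin> faces K r"
  using assms unfolding unique_blockers_def by blast

lemma exchange_if_not_blocker:
  assumes "unique_blockers" "F \<in> faces K r" "u \<in> V - F"
    and "a \<in> F" "insert u (F - {a}) \<notin> faces K r" and "w \<in> F" "w \<noteq> a"
  shows "insert u (F - {w}) \<in> faces K r"
  using assms unfolding unique_blockers_def by blast

text \<open>This configuration yields a rhombic subcomplex, and it cannot occur for even \<open>r\<close>.\<close>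
definition blocker_conflict :: "'a set \<Rightarrow> 'a \<Rightarrow> 'a \<Rightarrow> 'a \<Rightarrow> 'a \<Rightarrow> bool" where
  "blocker_conflict E x y a b \<longleftrightarrow> E \<in> faces K r \<and> x \<in> V - E \<and> y \<in> V - E \<and> x \<noteq> y \<and>
     a \<in> E \<and> b \<in> E \<and> a \<noteq> b \<and> insert x (E - {a}) \<notin> faces K r \<and> insert y (E - {b}) \<notin> faces K r"

lemma blocker_conflict_sym: "blocker_conflict E x y a b \<Longrightarrow> blocker_conflict E y x b a"
  unfolding blocker_conflict_def by blast

lemma blocker_conflict_faces:
  assumes unique: unique_blockers and conflict: "blocker_conflict E x y a b"
    and z: "z \<in> insert x (insert y E)" "z \<noteq> a" "z \<noteq> y"
  shows "insert x (insert y E) - {a, z} \<in> faces K r"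
    and "insert x (insert y E) - {y, z} \<in> faces K r"
proof -
  have E: "E \<in> faces K r" and x: "x \<in> V - E" and y: "y \<in> V - E" and xy: "x \<noteq> y"
    and a: "a \<in> E" and b: "b \<in> E" and ab: "a \<noteq> b"
    and xa: "insert x (E - {a}) \<notin> faces K r" and yb: "insert y (E - {b}) \<notin> faces K r"
    using conflict unfolding blocker_conflict_def by auto
  define Fa where "Fa = insert y (E - {a})"
  have Fa: "Fa \<in> faces K r" unfolding Fa_def using exchange_if_not_blocker[OF unique E y b yb a ab] .
  have "insert x (Fa - {y}) \<notin> faces K r" using xa y unfolding Fa_def by (simp add: insert_Diff_if)
  moreover have "x \<in> V - Fa" "y \<in> Fa" using x xy unfolding Fa_def by auto
  ultimately have x_exchange: "insert x (Fa - {w}) \<in> faces K r" if "w \<in> Fa" "w \<noteq> y" for w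
    using exchange_if_not_blocker[OF unique Fa] that by blast
  show "insert x (insert y E) - {a, z} \<in> faces K r"
  proof (cases "z = x")
    case True
    hence "insert x (insert y E) - {a, z} = Fa" unfolding Fa_def using x y xy a by auto
    thus ?thesis using Fa by simp
  next
    case False
    hence "z \<in> Fa" "insert x (insert y E) - {a, z} = insert x (Fa - {z})"
      using z x y a unfolding Fa_def by auto
    thus ?thesis using x_exchange z by simp
  qed
  show "insert x (insert y E) - {y, z} \<in> faces K r"
  proof (cases "z = x")
    case True
    hence "insert x (insert y E) - {y, z} = E" using x y xy by auto
    thus ?thesis using E by simp
  next
    case False
    hence "z \<in> E" "insert x (insert y E) - {y, z} = insert x (E - {z})" using z x y xy by auto
    thus ?thesis using exchange_if_not_blocker[OF unique E x a xa] z by simp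
  qed
qed

lemma contains_rhombic_if:
  assumes B: "finite B" "card B = r + 1" and pq: "p \<noteq> q" "p \<notin> B" "q \<notin> B"
    and faces: "\<And>z. z \<in> B \<Longrightarrow> insert p (B - {z}) \<in> K \<and> insert q (B - {z}) \<in> K"
  shows "contains_copy K {1..r+3} (rhombic r)"
proof -
  obtain \<psi> where \<psi>: "bij_betw \<psi> {1..r+1} B" using ex_bij_betw_nat_finite_1[OF B(1)] B(2) by auto
  have \<psi>B: "\<psi> i \<in> B" if "i \<in> {1..r+1}" for i using \<psi> that unfolding bij_betw_def by auto
  define \<phi> where "\<phi> i = (if i = r + 2 then p else if i = r + 3 then q else \<psi> i)" for i
  have \<phi>_eq: "\<phi> ` {1..r+3} = insert p (insert q (\<psi> ` {1..r+1}))"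
  proof -
    have "{1..r+3} = insert (r + 2) (insert (r + 3) {1..r+1})" by auto
    hence "\<phi> ` {1..r+3} = insert (\<phi> (r + 2)) (insert (\<phi> (r + 3)) (\<phi> ` {1..r+1}))" by simp
    moreover have "\<phi> (r + 2) = p" "\<phi> (r + 3) = q" unfolding \<phi>_def by simp_all
    moreover have "\<phi> ` {1..r+1} = \<psi> ` {1..r+1}" unfolding \<phi>_def by (intro image_cong) auto
    ultimately show ?thesis by simp
  qed
  have "inj_on \<phi> {1..r+3}"
  proof (rule eq_card_imp_inj_on)
    have "card (\<psi> ` {1..r+1}) = r + 1" using \<psi> B(2) by (simp add: bij_betw_def)
    moreover have "p \<notin> \<psi> ` {1..r+1}" "q \<notin> \<psi> ` {1..r+1}" using \<psi>B pq by auto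
    ultimately show "card (\<phi> ` {1..r+3}) = card {1..r+3}" unfolding \<phi>_eq using pq by simp
  qed simp
  moreover have "\<phi> ` F \<in> K" if "F \<in> rhombic r" for F
  proof -
    obtain i S where iS: "i \<in> {r+2, r+3}" "S \<subseteq> {1..r+1}" "card S = r" "F \<subseteq> insert i S"
      using \<open>F \<in> rhombic r\<close> unfolding rhombic_def gen_complex_def by blast
    have img: "\<phi> ` insert i S = insert (\<phi> i) (\<psi> ` S)"
      using iS(2) unfolding \<phi>_def by (auto intro!: image_cong)
    have "\<psi> ` S \<subseteq> B" using iS(2) \<psi>B by auto
    moreover have "card (\<psi> ` S) + 1 = card B"
      using card_image[OF inj_on_subset[OF bij_betw_imp_inj_on[OF \<psi>] iS(2)]] iS(3) B(2) by simp
    ultimately obtain z where "z \<in> B" "\<psi> ` S = B - {z}" using eq_Diff_singleton_if_card_Suc[OF B(1)] by blast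
    moreover have "\<phi> i = p \<or> \<phi> i = q" using iS(1) unfolding \<phi>_def by auto
    ultimately have "\<phi> ` insert i S \<in> K" unfolding img using faces by auto
    thus ?thesis by (rule face_downward_closed[OF _ image_mono[OF iS(4)]])
  qed
  ultimately show ?thesis unfolding contains_copy_def by blast
qed

context
  fixes E x y a b
  assumes unique: unique_blockers and conflict: "blocker_conflict E x y a b"
begin

lemma blocker_conflict_rhombic: "contains_copy K {1..r+3} (rhombic r)"
proof -
  have E: "E \<in> faces K r" and x: "x \<in> V - E" and y: "y \<in> V - E" and xy: "x \<noteq> y" and a: "a \<in> E"
    using conflict unfolding blocker_conflict_def by auto
  define B where "B = insert x (insert y E) - {a, y}"
  have "card (insert x (insert y E)) = r + 3" using E x y xy finite_top_face card_top_face by simp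
  moreover have "card {a, y} = 2" using a y by (cases "a = y") auto
  ultimately have card: "card B = r + 1" using a unfolding B_def by (simp add: card_Diff_subset)
  show ?thesis
  proof (rule contains_rhombic_if[of B a y])
    show "finite B" unfolding B_def using finite_top_face[OF E] by simp
    show "card B = r + 1" by (fact card)
    show "a \<noteq> y" "a \<notin> B" "y \<notin> B" using a y unfolding B_def by auto
  next
    fix z assume "z \<in> B"
    hence z: "z \<in> insert x (insert y E)" "z \<noteq> a" "z \<noteq> y" unfolding B_def by auto
    have "insert a (B - {z}) = insert x (insert y E) - {y, z}"
      "insert y (B - {z}) = insert x (insert y E) - {a, z}"
      using z a y unfolding B_def by auto
    thus "insert a (B - {z}) \<in> K \<and> insert y (B - {z}) \<in> K"
      using blocker_conflict_faces[OF unique conflict z] top_faces_iff by simp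
  qed
qed

text \<open>This pairs off the \<open>r - 1\<close> elements of \<open>E - {a, b}\<close> by a fixed-point-free involution.\<close>
lemma blocker_conflict_partner:
  assumes w: "w \<in> E - {a, b}"
  shows "\<exists>!t. t \<in> insert x (insert y E) \<and> t \<noteq> w \<and> insert x (insert y E) - {w, t} \<notin> faces K r"
    and "t \<in> insert x (insert y E) \<Longrightarrow> insert x (insert y E) - {w, t} \<notin> faces K r \<Longrightarrow> t \<in> E - {a, b}"
proof -
  let ?Y = "insert x (insert y E)"
  have E: "E \<in> faces K r" and x: "x \<in> V - E" and y: "y \<in> V - E" and xy: "x \<noteq> y"
    and b: "b \<in> E" and yb: "insert y (E - {b}) \<notin> faces K r"
    using conflict unfolding blocker_conflict_def by auto
  define Fw where "Fw = insert y (E - {w})"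
  have Fw: "Fw \<in> faces K r" unfolding Fw_def using exchange_if_not_blocker[OF unique E y b yb] w by auto
  have xFw: "x \<in> V - Fw" unfolding Fw_def using x xy by auto
  have "t \<in> ?Y \<and> t \<noteq> w \<and> ?Y - {w, t} \<notin> faces K r \<longleftrightarrow> t \<in> Fw \<and> insert x (Fw - {t}) \<notin> faces K r" for t
  proof (cases "t = x")
    case True
    have "?Y - {w, x} = Fw" unfolding Fw_def using w x y xy by auto
    thus ?thesis unfolding True using Fw xFw by simp
  next
    case False
    have "x \<notin> E" "y \<notin> E" "w \<in> E" using w x y by auto
    hence "?Y - {w, t} = insert x (Fw - {t})" "t \<in> ?Y \<and> t \<noteq> w \<longleftrightarrow> t \<in> Fw"
      unfolding Fw_def using False xy by blast+
    thus ?thesis by (simp only: conj_assoc[symmetric])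
  qed
  moreover have "\<exists>!t. t \<in> Fw \<and> insert x (Fw - {t}) \<notin> faces K r"
    using unique Fw xFw unfolding unique_blockers_def by blast
  ultimately show "\<exists>!t. t \<in> ?Y \<and> t \<noteq> w \<and> ?Y - {w, t} \<notin> faces K r" by simp
  assume t: "t \<in> ?Y" "?Y - {w, t} \<notin> faces K r"
  have wE: "w \<in> ?Y" "w \<noteq> a" "w \<noteq> y" "w \<noteq> b" "w \<noteq> x" using w x y by auto
  have Y: "insert y (insert x E) = ?Y" by (rule insert_commute)
  have "?Y - {w, t} = ?Y - {t, w}" by (simp add: insert_commute)
  moreover note faces_x = blocker_conflict_faces[OF unique conflict wE(1-3)]
    and faces_y = blocker_conflict_faces[OF unique blocker_conflict_sym[OF conflict], unfolded Y,
      OF wE(1,4,5)]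
  ultimately have "t \<noteq> a" "t \<noteq> y" "t \<noteq> b" "t \<noteq> x" using t(2) by metis+
  thus "t \<in> E - {a, b}" using t(1) by simp
qed

lemma blocker_conflict_odd: "odd r"
proof -
  let ?Y = "insert x (insert y E)" and ?A = "E - {a, b}"
  have E: "E \<in> faces K r" and a: "a \<in> E" and b: "b \<in> E" and ab: "a \<noteq> b"
    using conflict unfolding blocker_conflict_def by auto
  define m where "m w = (THE t. t \<in> ?Y \<and> t \<noteq> w \<and> ?Y - {w, t} \<notin> faces K r)" for w
  have mY: "m w \<in> ?Y" and m_neq: "m w \<noteq> w" and m_nonface: "?Y - {w, m w} \<notin> faces K r"
    if "w \<in> ?A" for w
    using theI'[OF blocker_conflict_partner(1)[OF that]] unfolding m_def by auto
  have mA: "m w \<in> ?A" if "w \<in> ?A" for w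
    using blocker_conflict_partner(2)[OF that mY[OF that] m_nonface[OF that]] .
  have "m (m w) = w" if w: "w \<in> ?A" for w
  proof -
    have "w \<in> ?Y" "?Y - {m w, w} \<notin> faces K r" using w m_nonface[OF w] by (auto simp: insert_commute)
    moreover have "w \<noteq> m w" using m_neq[OF w] by simp
    ultimately show ?thesis
      using blocker_conflict_partner(1)[OF mA[OF w]] mY[OF mA[OF w]] m_neq[OF mA[OF w]]
        m_nonface[OF mA[OF w]]
      by blast
  qed
  hence "\<forall>w\<in>?A. m w \<in> ?A \<and> m w \<noteq> w \<and> m (m w) = w" using mA m_neq by blast
  hence "even (card ?A)" by (intro even_card_if_involution) (use finite_top_face[OF E] in auto)
  moreover have "card ?A = r - 1"
    using a b ab finite_top_face[OF E] card_top_face[OF E] by (simp add: card_Diff_subset)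
  ultimately show ?thesis using r_pos by simp
qed

end

definition tent_apex :: "'a \<Rightarrow> bool" where
  "tent_apex a \<longleftrightarrow> faces K r = {S. S \<subseteq> V \<and> card S = r + 1 \<and> a \<in> S}"

lemma unique_blockers_if_tent_apex:
  assumes tent: "tent_apex a"
  shows unique_blockers
  unfolding unique_blockers_def
proof (intro ballI)
  fix F u assume F: "F \<in> faces K r" and u: "u \<in> V - F"
  have FV: "F \<subseteq> V" and card: "card F = r + 1" and aF: "a \<in> F"
    using F tent unfolding tent_apex_def by auto
  have "insert u (F - {w}) \<in> faces K r" if "w \<in> F" "w \<noteq> a" for w
    using that u aF FV card finite_top_face[OF F] tent unfolding tent_apex_def by auto
  moreover have "insert u (F - {a}) \<notin> faces K r" using u aF tent unfolding tent_apex_def by auto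
  ultimately show "\<exists>!w. w \<in> F \<and> insert u (F - {w}) \<notin> faces K r" using aF by blast
qed

definition blocking_apex :: "'a \<Rightarrow> 'a set \<Rightarrow> bool" where
  "blocking_apex a E \<longleftrightarrow> E \<in> faces K r \<and> a \<in> E \<and> (\<forall>x\<in>V - E. insert x (E - {a}) \<notin> faces K r)"

context
  assumes unique: unique_blockers and no_conflict: "\<And>E x y a b. \<not> blocker_conflict E x y a b"
begin

lemma exchange_independent_of_vertex:
  assumes E: "E \<in> faces K r" and x: "x \<in> V - E" and y: "y \<in> V - E" and w: "w \<in> E"
    and x_face: "insert x (E - {w}) \<in> faces K r"
  shows "insert y (E - {w}) \<in> faces K r"
proof (rule ccontr)
  assume y_blocked: "insert y (E - {w}) \<notin> faces K r"
  obtain a where a: "a \<in> E" "insert x (E - {a}) \<notin> faces K r" using obtain_blocker[OF unique E x] .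
  have "a \<noteq> w" "x \<noteq> y" using a x_face y_blocked by auto
  hence "blocker_conflict E x y a w" unfolding blocker_conflict_def using E x y a w y_blocked by simp
  thus False using no_conflict by blast
qed

lemma blocking_apex_exchange:
  assumes apex: "blocking_apex a E" and x: "x \<in> V - E" and w: "w \<in> E" "w \<noteq> a"
  shows "blocking_apex a (insert x (E - {w}))"
proof -
  have E: "E \<in> faces K r" and aE: "a \<in> E" and blocked: "\<forall>x\<in>V - E. insert x (E - {a}) \<notin> faces K r"
    using apex unfolding blocking_apex_def by auto
  define E' where "E' = insert x (E - {w})"
  have E': "E' \<in> faces K r"
    unfolding E'_def using exchange_if_not_blocker[OF unique E x aE] blocked x w by blast
  have wV: "w \<in> V - E'" unfolding E'_def using w x top_face_subset[OF E] by auto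
  have "insert w (E' - {a}) = insert x (E - {a})" unfolding E'_def using w x aE by auto
  hence "insert w (E' - {a}) \<notin> faces K r" using blocked x by simp
  hence "insert y (E' - {a}) \<notin> faces K r" if "y \<in> V - E'" for y
    using exchange_independent_of_vertex[OF E' that wV] aE w unfolding E'_def by blast
  thus ?thesis unfolding blocking_apex_def E'_def[symmetric] using E' aE w by (simp add: E'_def)
qed

lemma faces_through_blocking_apex:
  assumes "blocking_apex a E" "S \<subseteq> V" "card S = r + 1" "a \<in> S"
  shows "S \<in> faces K r"
  using assms
proof (induction "card (S - E)" arbitrary: E)
  case 0
  have E: "E \<in> faces K r" using "0.prems"(1) unfolding blocking_apex_def by blast
  have "S \<subseteq> E" using "0.hyps" "0.prems"(2) finite_V finite_subset by (metis Diff_eq_empty_iff card_0_eq finite_Diff)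
  hence "S = E" using card_subset_eq[OF finite_top_face[OF E]] card_top_face[OF E] "0.prems"(3) by simp
  thus ?case using E by simp
next
  case (Suc k)
  have E: "E \<in> faces K r" and aE: "a \<in> E" using Suc.prems(1) unfolding blocking_apex_def by auto
  have fin: "finite S" "finite E" using Suc.prems(2) finite_V finite_subset finite_top_face[OF E] by auto
  obtain x where x: "x \<in> S" "x \<notin> E" using Suc.hyps(2) by (metis card.empty Diff_eq_empty_iff nat.distinct(1) subsetI)
  have "card (E - S) = card (S - E)"
    using card_Diff_subset_Int[of E S] card_Diff_subset_Int[of S E] fin card_top_face[OF E] Suc.prems(3)
    by (simp add: Int_commute)
  then obtain w where w: "w \<in> E" "w \<notin> S" using Suc.hyps(2) by (metis card.empty Diff_eq_empty_iff nat.distinct(1) subsetI)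
  have xV: "x \<in> V - E" using x Suc.prems(2) by auto
  have "S - insert x (E - {w}) = (S - E) - {x}" using w by auto
  hence "k = card (S - insert x (E - {w}))" using Suc.hyps(2) x by simp
  moreover have "blocking_apex a (insert x (E - {w}))"
    using blocking_apex_exchange[OF Suc.prems(1) xV w(1)] w Suc.prems(4) by blast
  ultimately show ?case using Suc.hyps(1) Suc.prems(2-4) by blast
qed

lemma exists_blocking_apex:
  assumes "V \<noteq> {}"
  shows "\<exists>a E. blocking_apex a E"
proof -
  obtain E where E: "E \<in> faces K r" using top_faces_nonempty[OF assms] by blast
  show ?thesis
  proof (cases "V - E = {}")
    case True
    obtain a where "a \<in> E" using card_top_face[OF E] by fastforce
    thus ?thesis using True E unfolding blocking_apex_def by blast
  next
    case False
    then obtain x where x: "x \<in> V - E" by blast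
    obtain a where a: "a \<in> E" "insert x (E - {a}) \<notin> faces K r" using obtain_blocker[OF unique E x] .
    have "insert y (E - {a}) \<notin> faces K r" if "y \<in> V - E" for y
      using exchange_independent_of_vertex[OF E that x a(1)] a(2) by blast
    thus ?thesis using E a unfolding blocking_apex_def by blast
  qed
qed

lemma tent_apex_if_no_conflict:
  assumes "V \<noteq> {}"
  shows "\<exists>a\<in>V. tent_apex a"
proof -
  obtain a E where apex: "blocking_apex a E" using exists_blocking_apex[OF assms] by blast
  hence aV: "a \<in> V" using top_face_subset unfolding blocking_apex_def by blast
  have "a \<in> S" if S: "S \<in> faces K r" for S
  proof (rule ccontr)
    assume aS: "a \<notin> S"
    then obtain w where w: "w \<in> S" "insert a (S - {w}) \<notin> faces K r"
      using obtain_blocker[OF unique S] aV by blast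
    moreover have "insert a (S - {w}) \<subseteq> V" "card (insert a (S - {w})) = r + 1"
      using aV aS w top_face_subset[OF S] finite_top_face[OF S] card_top_face[OF S] by auto
    ultimately show False using faces_through_blocking_apex[OF apex] by blast
  qed
  hence "tent_apex a"
    unfolding tent_apex_def using faces_through_blocking_apex[OF apex] top_face_subset card_top_face
    by blast
  thus ?thesis using aV by blast
qed

end

lemma tent_apex_if_even:
  assumes unique_blockers and "even r" and "V \<noteq> {}"
  shows "\<exists>a\<in>V. tent_apex a"
  using tent_apex_if_no_conflict blocker_conflict_odd assms by blast

lemma tent_apex_or_rhombic:
  assumes unique_blockers and "V \<noteq> {}"
  shows "(\<exists>a\<in>V. tent_apex a) \<or> contains_copy K {1..r+3} (rhombic r)"
  using tent_apex_if_no_conflict blocker_conflict_rhombic assms by blast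

lemma tent_apex_iff_cone_complex: "tent_apex a \<longleftrightarrow> K = cone_complex V a (r + 1)"
proof
  assume "tent_apex a"
  thus "K = cone_complex V a (r + 1)"
    unfolding tent_apex_def cone_complex_def by (subst K_eq_down_closure) blast
next
  assume K: "K = cone_complex V a (r + 1)"
  have "faces K r = {S \<in> cone_complex V a (r + 1). card S = r + 1}"
    unfolding faces_def K ..
  thus "tent_apex a" unfolding tent_apex_def card_eq_in_cone_complex[OF finite_V] .
qed

lemma isomorphic_tented_iff:
  assumes V: "V \<noteq> {}"
  shows "isomorphic V K {1..card V} (tented (card V) r) \<longleftrightarrow> (\<exists>a\<in>V. tent_apex a)"
proof -
  let ?n = "card V"
  have n: "1 \<le> ?n" using V finite_V by (simp add: Suc_leI card_gt_0_iff)
  have tented: "tented ?n r = cone_complex {1..?n} ?n (r + 1)" by (rule tented_eq_cone_complex[OF n])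
  show ?thesis
  proof
    assume "isomorphic V K {1..?n} (tented ?n r)"
    then obtain \<phi> where \<phi>: "bij_betw \<phi> V {1..?n}" and K: "(\<lambda>X. \<phi> ` X) ` K = tented ?n r"
      unfolding isomorphic_def by blast
    define \<psi> where "\<psi> = inv_into V \<phi>"
    have \<psi>: "bij_betw \<psi> {1..?n} V" unfolding \<psi>_def by (rule bij_betw_inv_into[OF \<phi>])
    have cancel: "\<psi> ` \<phi> ` X = X" if "X \<in> K" for X
      unfolding \<psi>_def using face_subset[OF that] bij_betw_imp_inj_on[OF \<phi>] by simp
    have "(\<lambda>X. \<psi> ` \<phi> ` X) ` K = (\<lambda>X. X) ` K" by (rule image_cong[OF refl cancel])
    hence "K = (\<lambda>X. \<psi> ` \<phi> ` X) ` K" by simp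
    also have "\<dots> = (\<lambda>Y. \<psi> ` Y) ` (\<lambda>X. \<phi> ` X) ` K" by (simp add: image_image)
    also have "\<dots> = cone_complex V (\<psi> ?n) (r + 1)"
      unfolding K tented using \<psi> n by (intro image_cone_complex) auto
    finally have "tent_apex (\<psi> ?n)" unfolding tent_apex_iff_cone_complex .
    moreover have "\<psi> ?n \<in> V" using \<psi> n by (auto simp: bij_betw_def)
    ultimately show "\<exists>a\<in>V. tent_apex a" by blast
  next
    assume "\<exists>a\<in>V. tent_apex a"
    then obtain a where a: "a \<in> V" and K: "K = cone_complex V a (r + 1)"
      unfolding tent_apex_iff_cone_complex by blast
    obtain h where h: "bij_betw h {1..?n} V" using ex_bij_betw_nat_finite_1[OF finite_V] by blast
    define \<phi> where "\<phi> = transpose (inv_into {1..?n} h a) ?n \<circ> inv_into {1..?n} h"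
    have h': "bij_betw (inv_into {1..?n} h) V {1..?n}" by (rule bij_betw_inv_into[OF h])
    hence "inv_into {1..?n} h a \<in> {1..?n}" using a by (auto simp: bij_betw_def)
    hence \<phi>: "bij_betw \<phi> V {1..?n}" unfolding \<phi>_def using n
      by (intro bij_betw_trans[OF h']) (simp add: bij_betw_transpose_iff)
    have "\<phi> a = ?n" unfolding \<phi>_def by simp
    hence "(\<lambda>X. \<phi> ` X) ` K = tented ?n r"
      unfolding K tented using image_cone_complex[OF \<phi> a] by simp
    thus "isomorphic V K {1..?n} (tented ?n r)" unfolding isomorphic_def using \<phi> by blast
  qed
qed

context
  assumes r1: "r = 1"
begin

lemma top_face_eq_pair:
  assumes "F \<in> faces K r"
  obtains x y where "x \<noteq> y" "F = {x, y}"
  using card_top_face[OF assms] r1 card_2_iff by (metis one_add_one)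

lemma unique_blocker_edge:
  assumes unique: unique_blockers and pq: "{p, q} \<in> faces K r" and u: "u \<in> V" "u \<noteq> p" "u \<noteq> q"
  shows "{u, p} \<in> faces K r \<longleftrightarrow> {u, q} \<notin> faces K r"
proof -
  have "p \<noteq> q" using card_top_face[OF pq] r1 by auto
  hence "insert u ({p, q} - {p}) = {u, q}" "insert u ({p, q} - {q}) = {u, p}" by auto
  moreover have "u \<in> V - {p, q}" using u by simp
  hence "\<exists>!w. w \<in> {p, q} \<and> insert u ({p, q} - {w}) \<notin> faces K r"
    using bspec[OF bspec[OF unique[unfolded unique_blockers_def] pq]] by blast
  ultimately show ?thesis using \<open>p \<noteq> q\<close> by (metis insert_iff singletonD)
qed

text \<open>For \<open>r = 1\<close> the blocker condition says: every vertex outside an edge \<open>{a, b}\<close> is adjacent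
  to exactly one of \<open>a\<close>, \<open>b\<close>; so the neighbourhoods of \<open>b\<close> and \<open>a\<close> are the two sides.\<close>
lemma edges_across_neighbourhoods:
  assumes unique: unique_blockers and ab: "{a, b} \<in> faces K r"
  defines "A \<equiv> {v\<in>V. {v, b} \<in> faces K r}" and "B \<equiv> {v\<in>V. {v, a} \<in> faces K r}"
  shows "A \<inter> B = {}" and "A \<union> B = V" and "a \<in> A" and "b \<in> B"
    and "x \<in> V \<Longrightarrow> y \<in> V \<Longrightarrow> {x, y} \<in> faces K r \<longleftrightarrow> (x \<in> A \<and> y \<in> B) \<or> (y \<in> A \<and> x \<in> B)"
proof -
  have aV: "a \<in> V" and bV: "b \<in> V" using top_face_subset[OF ab] by auto
  have ba: "{b, a} \<in> faces K r" using ab by (simp add: insert_commute)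
  have neq: "x \<noteq> y" if "{x, y} \<in> faces K r" for x y using card_top_face[OF that] r1 by auto
  have xor: "{v, a} \<in> faces K r \<longleftrightarrow> {v, b} \<notin> faces K r" if "v \<in> V" "v \<noteq> a" "v \<noteq> b" for v
    using unique_blocker_edge[OF unique ab that] .
  show disj: "A \<inter> B = {}" unfolding A_def B_def using xor neq by blast
  show "A \<union> B = V" unfolding A_def B_def using xor ab ba aV bV by blast
  show "a \<in> A" "b \<in> B" unfolding A_def B_def using ab ba aV bV by auto
  assume x: "x \<in> V" and y: "y \<in> V"
  show "{x, y} \<in> faces K r \<longleftrightarrow> (x \<in> A \<and> y \<in> B) \<or> (y \<in> A \<and> x \<in> B)"
  proof
    assume xy: "{x, y} \<in> faces K r"
    have "\<not> (x \<in> A \<and> y \<in> A)"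
    proof
      assume "x \<in> A \<and> y \<in> A"
      hence "x \<noteq> b" "y \<noteq> b" "{x, b} \<in> faces K r" "{y, b} \<in> faces K r"
        using neq unfolding A_def by auto
      thus False using unique_blocker_edge[OF unique xy bV] by (simp add: insert_commute)
    qed
    moreover have "\<not> (x \<in> B \<and> y \<in> B)"
    proof
      assume "x \<in> B \<and> y \<in> B"
      hence "x \<noteq> a" "y \<noteq> a" "{x, a} \<in> faces K r" "{y, a} \<in> faces K r"
        using neq unfolding B_def by auto
      thus False using unique_blocker_edge[OF unique xy aV] by (simp add: insert_commute)
    qed
    moreover have "x \<in> A \<union> B" "y \<in> A \<union> B" using \<open>A \<union> B = V\<close> x y by auto
    ultimately show "(x \<in> A \<and> y \<in> B) \<or> (y \<in> A \<and> x \<in> B)" by blast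
  next
    have cross: "{x, y} \<in> faces K r" if "x \<in> A" "y \<in> B" for x y
    proof (cases "x = a \<or> y = b")
      case True
      thus ?thesis using that unfolding A_def B_def by (auto simp: insert_commute)
    next
      case False
      have xb: "{x, b} \<in> faces K r" and y: "y \<in> V" "y \<notin> A"
        using that disj unfolding A_def B_def by auto
      have "{y, b} \<notin> faces K r" using y unfolding A_def by simp
      moreover have "y \<noteq> x" "y \<noteq> b" using that disj False by auto
      ultimately have "{y, x} \<in> faces K r" using unique_blocker_edge[OF unique xb y(1)] by simp
      thus ?thesis by (simp add: insert_commute)
    qed
    assume "(x \<in> A \<and> y \<in> B) \<or> (y \<in> A \<and> x \<in> B)"
    thus "{x, y} \<in> faces K r" using cross[of x y] cross[of y x] by (auto simp: insert_commute)
  qed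
qed

lemma complete_bipartite_iff_unique_blockers:
  assumes "V \<noteq> {}"
  shows "complete_bipartite V K \<longleftrightarrow> unique_blockers"
proof
  assume unique: unique_blockers
  obtain F where "F \<in> faces K r" using top_faces_nonempty[OF assms] by blast
  then obtain a b where ab: "{a, b} \<in> faces K r" using top_face_eq_pair by metis
  note parts = edges_across_neighbourhoods[OF unique ab]
  let ?A = "{v\<in>V. {v, b} \<in> faces K r}" and ?B = "{v\<in>V. {v, a} \<in> faces K r}"
  have "faces K 1 = {{x, y} | x y. x \<in> ?A \<and> y \<in> ?B}"
  proof (intro equalityI subsetI)
    fix F assume "F \<in> faces K 1"
    hence F: "F \<in> faces K r" using r1 by simp
    then obtain x y where xy: "F = {x, y}" using top_face_eq_pair by metis
    hence "x \<in> V" "y \<in> V" using top_face_subset[OF F] by auto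
    hence "(x \<in> ?A \<and> y \<in> ?B) \<or> (y \<in> ?A \<and> x \<in> ?B)" using parts(5) F xy by simp
    moreover have "F = {y, x}" using xy by (simp add: insert_commute)
    ultimately show "F \<in> {{x, y} | x y. x \<in> ?A \<and> y \<in> ?B}" using xy by blast
  next
    fix F assume "F \<in> {{x, y} | x y. x \<in> ?A \<and> y \<in> ?B}"
    thus "F \<in> faces K 1" using parts(5) r1 by auto
  qed
  thus "complete_bipartite V K" unfolding complete_bipartite_def using parts(1-4) by blast
next
  assume "complete_bipartite V K"
  then obtain A B where AB: "A \<inter> B = {}" "A \<union> B = V"
    and edges: "faces K r = {{a, b} | a b. a \<in> A \<and> b \<in> B}"
    unfolding complete_bipartite_def r1 by blast
  have edge_iff: "{x, y} \<in> faces K r \<longleftrightarrow> (x \<in> A \<and> y \<in> B) \<or> (y \<in> A \<and> x \<in> B)" for x y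
    unfolding edges by (auto simp: doubleton_eq_iff)
  show unique_blockers unfolding unique_blockers_def
  proof (intro ballI)
    fix F u assume F: "F \<in> faces K r" and u: "u \<in> V - F"
    obtain p q where pq: "p \<in> A" "q \<in> B" "F = {p, q}" using F edges by blast
    have "p \<noteq> q" using pq AB by auto
    hence "insert u (F - {p}) = {u, q}" "insert u (F - {q}) = {u, p}" using pq by auto
    moreover have "{u, q} \<in> faces K r \<longleftrightarrow> {u, p} \<notin> faces K r"
      using edge_iff[of u p] edge_iff[of u q] pq u AB by blast
    ultimately show "\<exists>!w. w \<in> F \<and> insert u (F - {w}) \<notin> faces K r"
      using pq \<open>p \<noteq> q\<close> by (metis insertE insert_iff singletonD)
  qed
qed

end

end

section \<open>The spectral bound\<close>

locale Delta_free_complex = pure_complex +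
  assumes Delta_free: "\<not> contains_copy K {1..r+2} (Delta_bd r)"
begin

text \<open>If all exchanges of \<open>u\<close> into \<open>F\<close> were faces, \<open>F \<union> {u}\<close> would span a copy of the boundary
  of an \<open>(r+1)\<close>-simplex.\<close>
lemma exists_blocked_exchange:
  assumes F: "F \<in> faces K r" and u: "u \<in> V - F"
  shows "\<exists>w\<in>F. insert u (F - {w}) \<notin> faces K r"
proof (rule ccontr)
  assume "\<not> ?thesis"
  hence all: "\<forall>w\<in>F. insert u (F - {w}) \<in> faces K r" by blast
  define X where "X = insert u F"
  have fX: "finite X" and cX: "card X = r + 2"
    unfolding X_def using F u finite_top_face card_top_face by auto
  have sub: "Y \<in> K" if "Y \<subseteq> X" "card Y = r + 1" for Y
  proof -
    have "card (X - Y) = 1" using that fX cX by (simp add: card_Diff_subset finite_subset)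
    then obtain z where z: "X - Y = {z}" using card_1_singletonE by blast
    hence Y: "Y = X - {z}" using that by auto
    show ?thesis
    proof (cases "z = u")
      case True
      thus ?thesis using Y F u top_faces_iff unfolding X_def by auto
    next
      case False
      hence "z \<in> F" "Y = insert u (F - {z})" using z Y unfolding X_def by auto
      thus ?thesis using all top_faces_iff by auto
    qed
  qed
  obtain \<phi> where \<phi>: "bij_betw \<phi> {1..r+2} X" using ex_bij_betw_nat_finite_1[OF fX] unfolding cX by blast
  have inj: "inj_on \<phi> {1..r+2}" using \<phi> by (simp add: bij_betw_def)
  have "\<phi> ` F' \<in> K" if F': "F' \<in> Delta_bd r" for F'
  proof -
    obtain T where T: "T \<subseteq> {1..r+2}" "card T = r + 1" "F' \<subseteq> T"
      using F' unfolding Delta_bd_def gen_complex_def by blast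
    have "\<phi> ` T \<subseteq> X" using \<phi> T by (auto simp: bij_betw_def)
    moreover have "card (\<phi> ` T) = r + 1" using card_image[OF inj_on_subset[OF inj T(1)]] T by simp
    ultimately have "\<phi> ` T \<in> K" by (rule sub)
    thus ?thesis by (rule face_downward_closed[OF _ image_mono[OF T(3)]])
  qed
  hence "contains_copy K {1..r+2} (Delta_bd r)" unfolding contains_copy_def using inj by auto
  thus False using Delta_free by simp
qed

lemma card_exchange_vertices_le:
  assumes F: "F \<in> faces K r" and u: "u \<in> V - F"
  shows "card (exchange_vertices F u) \<le> r"
proof -
  obtain w where w: "w \<in> F" "insert u (F - {w}) \<notin> faces K r"
    using exists_blocked_exchange[OF F u] by blast
  hence "exchange_vertices F u \<subseteq> F - {w}" unfolding exchange_vertices_def by auto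
  hence "card (exchange_vertices F u) \<le> card (F - {w})" using finite_top_face[OF F] by (intro card_mono) auto
  thus ?thesis using w finite_top_face[OF F] card_top_face[OF F] by simp
qed

lemma row_sum_le_bound:
  assumes F: "F \<in> faces K r"
  shows "row_sum F \<le> row_sum_bound"
proof -
  have "(\<Sum>u\<in>V - F. card (exchange_vertices F u)) \<le> (\<Sum>u\<in>V - F. r)"
    using card_exchange_vertices_le[OF F] by (intro sum_mono) auto
  also have "\<dots> = r * (card V - (r + 1))"
    using top_face_subset[OF F] finite_V card_top_face[OF F] finite_top_face[OF F]
    by (simp add: card_Diff_subset)
  finally show ?thesis using row_sum_eq[OF F] unfolding row_sum_bound_def by simp
qed

lemma row_sum_eq_bound_iff:
  assumes F: "F \<in> faces K r"
  shows "row_sum F = row_sum_bound \<longleftrightarrow> (\<forall>u\<in>V - F. card (exchange_vertices F u) = r)"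
proof
  assume eq: "row_sum F = row_sum_bound"
  show "\<forall>u\<in>V - F. card (exchange_vertices F u) = r"
  proof (rule ccontr)
    assume "\<not> ?thesis"
    then obtain u where "u \<in> V - F" "card (exchange_vertices F u) \<noteq> r" by blast
    hence "(\<Sum>u\<in>V - F. card (exchange_vertices F u)) < (\<Sum>u\<in>V - F. r)"
      using card_exchange_vertices_le[OF F] finite_V
      by (intro sum_strict_mono_ex1) (auto intro!: bexI[of _ u] simp: le_neq_implies_less)
    also have "\<dots> = r * (card V - (r + 1))"
      using top_face_subset[OF F] finite_V card_top_face[OF F] finite_top_face[OF F]
      by (simp add: card_Diff_subset)
    finally show False using eq row_sum_eq[OF F] unfolding row_sum_bound_def by simp
  qed
qed (rule row_sum_eq_bound[OF F])


lemma abs_eigenvalue_le_row_sum_bound: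
  assumes "is_eigenvalue_Qup K (r - 1) \<mu>"
  shows "\<bar>\<mu>\<bar> \<le> real row_sum_bound"
proof -
  obtain f where f0: "\<exists>G\<in>faces K (r - 1). f G \<noteq> 0"
    and eigen: "\<And>G. G \<in> faces K (r - 1) \<Longrightarrow> signless_up_laplacian K (r - 1) f G = \<mu> * f G"
    using assms unfolding is_eigenvalue_Qup_def by blast
  show ?thesis
  proof (cases "\<mu> = 0")
    case False
    then obtain F where F: "F \<in> faces K r" and nz: "boundary_sum f F \<noteq> 0"
      and max: "\<And>F'. F' \<in> faces K r \<Longrightarrow> \<bar>boundary_sum f F'\<bar> \<le> \<bar>boundary_sum f F\<bar>"
      using obtain_max_abs_boundary_sum[OF eigen] f0 by blast
    have "\<bar>\<mu>\<bar> * \<bar>boundary_sum f F\<bar> \<le> \<bar>boundary_sum f F\<bar> * real (row_sum F)"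
      using abs_eigen_boundary_sum_le[OF eigen F max] by simp
    also have "\<dots> \<le> \<bar>boundary_sum f F\<bar> * real row_sum_bound"
      using row_sum_le_bound[OF F] by (simp add: mult_left_mono)
    finally show ?thesis using nz by (simp add: mult.commute)
  qed simp
qed

text \<open>The eigenfunction of the extremal eigenvalue has \<open>|B\<^sup>T f|\<close> constant on all \<open>r\<close>-faces,
  hence every row sum is extremal.\<close>
lemma row_sum_eq_bound_if_eigenvalue:
  assumes "is_eigenvalue_Qup K (r - 1) (real row_sum_bound)" and F: "F \<in> faces K r"
  shows "row_sum F = row_sum_bound"
proof -
  let ?\<mu> = "real row_sum_bound"
  obtain f where f0: "\<exists>G\<in>faces K (r - 1). f G \<noteq> 0"
    and eigen: "\<And>G. G \<in> faces K (r - 1) \<Longrightarrow> signless_up_laplacian K (r - 1) f G = ?\<mu> * f G"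
    using assms unfolding is_eigenvalue_Qup_def by blast
  have "?\<mu> \<noteq> 0" unfolding row_sum_bound_def of_nat_eq_0_iff by simp
  then obtain F0 where F0: "F0 \<in> faces K r" and nz: "boundary_sum f F0 \<noteq> 0"
    and max: "\<And>F. F \<in> faces K r \<Longrightarrow> \<bar>boundary_sum f F\<bar> \<le> \<bar>boundary_sum f F0\<bar>"
    using obtain_max_abs_boundary_sum[OF eigen] f0 by blast
  define Ms where "Ms = {F \<in> faces K r. \<bar>boundary_sum f F\<bar> = \<bar>boundary_sum f F0\<bar>}"
  have extremal: "row_sum F = row_sum_bound" if "F \<in> Ms" for F
  proof -
    have F: "F \<in> faces K r" and FM: "\<bar>boundary_sum f F\<bar> = \<bar>boundary_sum f F0\<bar>"
      using that unfolding Ms_def by auto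
    have "?\<mu> * \<bar>boundary_sum f F0\<bar> \<le> \<bar>boundary_sum f F0\<bar> * real (row_sum F)"
      using abs_eigen_boundary_sum_le[OF eigen F max] FM by simp
    hence "row_sum_bound \<le> row_sum F" using nz by (simp add: mult.commute)
    thus ?thesis using row_sum_le_bound[OF F] by simp
  qed
  have "Ms = faces K r"
  proof (rule exchange_closed_set_eq_top_faces)
    show "Ms \<subseteq> faces K r" "Ms \<noteq> {}" using F0 unfolding Ms_def by auto
  next
    fix F F' assume FM: "F \<in> Ms" and F': "F' \<in> faces K r" and card: "card (F \<inter> F') = r"
    have F: "F \<in> faces K r" and Fmax: "\<bar>boundary_sum f F\<bar> = \<bar>boundary_sum f F0\<bar>"
      using FM unfolding Ms_def by auto
    have "\<bar>boundary_sum f F0\<bar> * real (row_sum F) \<le> \<bar>?\<mu>\<bar> * \<bar>boundary_sum f F\<bar>"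
      using extremal[OF FM] Fmax by simp
    moreover have "F \<inter> F' \<in> boundary F" "F' \<in> cofaces (F \<inter> F')"
      using card F' unfolding boundary_def cofaces_def by auto
    ultimately have "\<bar>boundary_sum f F'\<bar> = \<bar>boundary_sum f F0\<bar>"
      using boundary_sum_attains_bound[OF eigen F max] by blast
    thus "F' \<in> Ms" using F' unfolding Ms_def by simp
  next
    fix F u assume "F \<in> Ms" "u \<in> V - F"
    thus "card (exchange_vertices F u) = r"
      using extremal row_sum_eq_bound_iff unfolding Ms_def by blast
  qed
  thus ?thesis using extremal F by blast
qed

theorem q_up_le_row_sum_bound:
  assumes "V \<noteq> {}"
  shows "q_up K (r - 1) \<le> real row_sum_bound"
  using abs_eigenvalue_le_row_sum_bound[OF q_up_is_eigenvalue[OF finite_faces ridges_nonempty[OF assms]]]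
  by simp

theorem q_up_eq_row_sum_bound_iff:
  assumes "V \<noteq> {}"
  shows "q_up K (r - 1) = real row_sum_bound \<longleftrightarrow>
    (\<forall>F\<in>faces K r. \<forall>u\<in>V - F. card (exchange_vertices F u) = r)"
proof
  assume "q_up K (r - 1) = real row_sum_bound"
  hence "is_eigenvalue_Qup K (r - 1) (real row_sum_bound)"
    using q_up_is_eigenvalue[OF finite_faces ridges_nonempty[OF assms]] by simp
  thus "\<forall>F\<in>faces K r. \<forall>u\<in>V - F. card (exchange_vertices F u) = r"
    using row_sum_eq_bound_if_eigenvalue row_sum_eq_bound_iff by blast
next
  assume "\<forall>F\<in>faces K r. \<forall>u\<in>V - F. card (exchange_vertices F u) = r"
  hence "is_eigenvalue_Qup K (r - 1) (real row_sum_bound)"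
    using constant_row_sum_eigenvalue[OF assms] row_sum_eq_bound by blast
  hence "real row_sum_bound \<le> q_up K (r - 1)"
    by (rule eigenvalue_le_q_up[OF finite_faces ridges_nonempty[OF assms]])
  thus "q_up K (r - 1) = real row_sum_bound" using q_up_le_row_sum_bound[OF assms] by simp
qed

end

theorem mainTheorem6:
  fixes V :: "'a set" and K :: "'a set set" and r n :: nat
  assumes "r \<ge> 1" and "n \<ge> r + 1"
    and "simplicial_complex V K" and "card V = n" and "pure_dim K r"
    and "\<not> contains_copy K {1..r+2} (Delta_bd r)"
  shows "q_up K (r - 1) \<le> real r * real n - real r ^ 2 + 1
    \<and> (q_up K (r - 1) = real r * real n - real r ^ 2 + 1 \<longleftrightarrow>
         (\<forall>F\<in>faces K r. \<forall>u\<in>V - F. card (N_d K r F u) = r))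
    \<and> (r = 1 \<longrightarrow> (q_up K (r - 1) = real r * real n - real r ^ 2 + 1 \<longleftrightarrow>
         complete_bipartite V K))
    \<and> (r \<ge> 2 \<and> even r \<longrightarrow> (q_up K (r - 1) = real r * real n - real r ^ 2 + 1 \<longleftrightarrow>
         isomorphic V K {1..n} (tented n r)))
    \<and> (r \<ge> 3 \<and> odd r \<longrightarrow> (q_up K (r - 1) = real r * real n - real r ^ 2 + 1 \<longrightarrow>
         isomorphic V K {1..n} (tented n r) \<or> contains_copy K {1..r+3} (rhombic r)))"
proof -
  interpret Delta_free_complex V K r using assms by unfold_locales simp_all
  have V: "V \<noteq> {}" using assms(2,4) by auto
  obtain m where m: "n = m + (r + 1)" using assms(2) le_Suc_ex by (metis add.commute)
  have bound: "real row_sum_bound = real r * real n - real r ^ 2 + 1"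
    unfolding row_sum_bound_def assms(4) m by (simp add: algebra_simps power2_eq_square)
  have extremal: "q_up K (r - 1) = real r * real n - real r ^ 2 + 1 \<longleftrightarrow> unique_blockers"
    using q_up_eq_row_sum_bound_iff[OF V] unique_blockers_iff bound by simp
  have "(\<forall>F\<in>faces K r. \<forall>u\<in>V - F. card (N_d K r F u) = r) \<longleftrightarrow> unique_blockers"
    using card_N_d unique_blockers_iff by auto
  moreover have "isomorphic V K {1..n} (tented n r) \<longleftrightarrow> (\<exists>a\<in>V. tent_apex a)"
    using isomorphic_tented_iff[OF V] assms(4) by simp
  ultimately show ?thesis
    using q_up_le_row_sum_bound[OF V] bound extremal complete_bipartite_iff_unique_blockers[OF _ V]
      unique_blockers_if_tent_apex tent_apex_if_even[OF _ _ V] tent_apex_or_rhombic[OF _ V]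
    by auto
qed

end
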